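(* Let $f \in K^{\times}\setminus k$ satisfy $f'=af$ for some $a\in k$, and let $g\in K$ satisfy a nonzero homogeneous linear differential equation with coefficients in $k$. Then $f$ and $g$ are algebraically dependent over $k$ if and only if there exist an element $\theta$ in an algebraic extension of $K$ and an integer $n$ such that $$f=\theta^{n}\quad\text{and}\quad g\in k[\theta,\theta^{-1}].$$
   Context: $K$ is a differential field of characteristic zero (derivation $y\mapsto y'$), $k\subset K$ is an algebraically closed differential subfield, and $K$ and $k$ have the same field of constants $C=\{y\in K: y'=0\}$. *)

theory Defs
  imports "HOL-Computational_Algebra.Polynomial"
begin

text \<open>Ambient setting: all fields live inside one field type 'a (later taken to be
algebraically closed), and are given as carrier subsets.\<close>

definition is_subfield :: "'a::field set \<Rightarrow> bool" where
  "is_subfield S \<longleftrightarrow> 0 \<in> S \<and> 1 \<in> S \<and>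
     (\<forall>x\<in>S. \<forall>y\<in>S. x + y \<in> S \<and> x * y \<in> S) \<and>
     (\<forall>x\<in>S. - x \<in> S) \<and> (\<forall>x\<in>S. x \<noteq> 0 \<longrightarrow> inverse x \<in> S)"

text \<open>D is a derivation on the field K (values outside K are irrelevant).\<close>
definition is_derivation :: "'a::field set \<Rightarrow> ('a \<Rightarrow> 'a) \<Rightarrow> bool" where
  "is_derivation K D \<longleftrightarrow> (\<forall>x\<in>K. D x \<in> K) \<and>
     (\<forall>x\<in>K. \<forall>y\<in>K. D (x + y) = D x + D y \<and> D (x * y) = x * D y + D x * y)"

definition differential_field :: "'a::field set \<Rightarrow> ('a \<Rightarrow> 'a) \<Rightarrow> bool" where
  "differential_field K D \<longleftrightarrow> is_subfield K \<and> is_derivation K D"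

definition differential_subfield :: "'a::field set \<Rightarrow> 'a set \<Rightarrow> ('a \<Rightarrow> 'a) \<Rightarrow> bool" where
  "differential_subfield k K D \<longleftrightarrow> is_subfield k \<and> k \<subseteq> K \<and> (\<forall>x\<in>k. D x \<in> k)"

definition constants :: "'a::field set \<Rightarrow> ('a \<Rightarrow> 'a) \<Rightarrow> 'a set" where
  "constants K D = {y \<in> K. D y = 0}"

definition alg_closed_subfield :: "'a::field set \<Rightarrow> bool" where
  "alg_closed_subfield k \<longleftrightarrow>
     (\<forall>p. (\<forall>i. coeff p i \<in> k) \<longrightarrow> degree p > 0 \<longrightarrow> (\<exists>x\<in>k. poly p x = 0))"

definition algebraic_over :: "'a::field set \<Rightarrow> 'a \<Rightarrow> bool" where
  "algebraic_over K x \<longleftrightarrow> (\<exists>p. p \<noteq> 0 \<and> (\<forall>i. coeff p i \<in> K) \<and> poly p x = 0)"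

definition satisfies_nonzero_hlde :: "'a::field set \<Rightarrow> ('a \<Rightarrow> 'a) \<Rightarrow> 'a \<Rightarrow> bool" where
  "satisfies_nonzero_hlde k D g \<longleftrightarrow>
     (\<exists>n c. (\<forall>i\<le>n. c i \<in> k) \<and> (\<exists>i\<le>n. c i \<noteq> 0) \<and>
            (\<Sum>i\<le>n. c i * (D ^^ i) g) = 0)"

definition alg_dependent2 :: "'a::field set \<Rightarrow> 'a \<Rightarrow> 'a \<Rightarrow> bool" where
  "alg_dependent2 k f g \<longleftrightarrow>
     (\<exists>N c. (\<forall>i\<le>N. \<forall>j\<le>N. c i j \<in> k) \<and> (\<exists>i\<le>N. \<exists>j\<le>N. c i j \<noteq> 0) \<and>
            (\<Sum>i\<le>N. \<Sum>j\<le>N. c i j * f ^ i * g ^ j) = 0)"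

definition in_laurent :: "'a::field set \<Rightarrow> 'a \<Rightarrow> 'a \<Rightarrow> bool" where
  "in_laurent k \<theta> g \<longleftrightarrow>
     (\<exists>N::nat. \<exists>c::int \<Rightarrow> 'a. (\<forall>i\<in>{-int N..int N}. c i \<in> k) \<and>
        g = (\<Sum>i\<in>{-int N..int N}. c i * \<theta> powi i))"

end

theory Submission
  imports Defs
begin

(* If f and g are algebraically dependent over k, then g is algebraic over k(f), and the derivation
   delta = f d/df of k(f) (f is transcendental over the algebraically closed k) extends uniquely to
   E = k(f, g). As f'/f lies in k, delta commutes with D on E, so all delta^j g solve the linear
   differential equation of g; since K has no new constants they are linearly dependent over k, i.e.
   mu(delta) g = 0 for some nonzero mu in k[T]. Comparing minimal polynomials over k(f) by means of the
   Euler Wronskian X (p' q - p q') shows that delta u = 1 has no solution in E, so delta acts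
   semisimply, and that every eigenvector h of delta satisfies h^n = b f^r with b in k and n > 0.
   Choosing theta with theta^M = f for a common multiple M of these n writes g as a Laurent
   polynomial in theta. Conversely, if f = theta^n and g is a Laurent polynomial in theta, the
   products f^i g^j, up to a common power of theta, are polynomials in theta of bounded degree, and
   there are more of them than the degree bound allows to be independent. *)

definition is_subring :: "'b::comm_ring_1 set \<Rightarrow> bool" where
  "is_subring S \<longleftrightarrow> 0 \<in> S \<and> 1 \<in> S \<and> (\<forall>x\<in>S. \<forall>y\<in>S. x + y \<in> S \<and> x * y \<in> S) \<and> (\<forall>x\<in>S. - x \<in> S)"

lemma subringD:
  assumes "is_subring S"
  shows "0 \<in> S" "1 \<in> S" "x \<in> S \<Longrightarrow> y \<in> S \<Longrightarrow> x + y \<in> S" "x \<in> S \<Longrightarrow> y \<in> S \<Longrightarrow> x * y \<in> S"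
    "x \<in> S \<Longrightarrow> - x \<in> S" "x \<in> S \<Longrightarrow> y \<in> S \<Longrightarrow> x - y \<in> S"
  using assms unfolding is_subring_def by (auto, metis diff_conv_add_uminus)

lemma subring_sum: "is_subring S \<Longrightarrow> (\<And>i. i \<in> A \<Longrightarrow> f i \<in> S) \<Longrightarrow> sum f A \<in> S"
  by (induction A rule: infinite_finite_induct) (simp_all add: subringD)

lemma subring_prod: "is_subring S \<Longrightarrow> (\<And>i. i \<in> A \<Longrightarrow> f i \<in> S) \<Longrightarrow> prod f A \<in> S"
  by (induction A rule: infinite_finite_induct) (simp_all add: subringD)

lemma subring_power: "is_subring S \<Longrightarrow> x \<in> S \<Longrightarrow> x ^ n \<in> S"
  by (induction n) (simp_all add: subringD)

lemma subring_of_nat: "is_subring S \<Longrightarrow> of_nat n \<in> S"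
  by (induction n) (simp_all add: subringD)

lemma subfield_imp_subring: "is_subfield S \<Longrightarrow> is_subring S"
  unfolding is_subfield_def is_subring_def by auto

lemma subfield_inverse: "is_subfield S \<Longrightarrow> x \<in> S \<Longrightarrow> inverse x \<in> S"
  unfolding is_subfield_def by (cases "x = 0") auto

lemma subfield_divide: "is_subfield S \<Longrightarrow> x \<in> S \<Longrightarrow> y \<in> S \<Longrightarrow> x / y \<in> S"
  unfolding divide_inverse by (intro subringD(4)[OF subfield_imp_subring] subfield_inverse)

definition polys_over :: "'b::zero set \<Rightarrow> 'b poly set" where
  "polys_over S = {p. \<forall>i. coeff p i \<in> S}"

lemma polys_overI: "(\<And>i. coeff p i \<in> S) \<Longrightarrow> p \<in> polys_over S"
  by (simp add: polys_over_def)

lemma polys_overD: "p \<in> polys_over S \<Longrightarrow> coeff p i \<in> S"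
  by (simp add: polys_over_def)

lemma subring_polys_over:
  assumes S: "is_subring S"
  shows "is_subring (polys_over S)"
  unfolding is_subring_def polys_over_def using subringD[OF S]
  by (auto simp: coeff_1 coeff_mult intro!: subring_sum[OF S])

lemma polys_over_pCons: "0 \<in> S \<Longrightarrow> pCons c p \<in> polys_over S \<longleftrightarrow> c \<in> S \<and> p \<in> polys_over S"
  unfolding polys_over_def by (auto simp: coeff_pCons split: nat.splits)

lemma polys_over_const: "0 \<in> S \<Longrightarrow> c \<in> S \<Longrightarrow> [:c:] \<in> polys_over S"
  by (simp add: polys_over_def coeff_pCons split: nat.splits)

lemma polys_over_monom: "0 \<in> S \<Longrightarrow> c \<in> S \<Longrightarrow> monom c n \<in> polys_over S"
  by (simp add: polys_over_def coeff_monom)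

lemma polys_over_smult: "is_subring S \<Longrightarrow> c \<in> S \<Longrightarrow> p \<in> polys_over S \<Longrightarrow> smult c p \<in> polys_over S"
  by (simp add: polys_over_def subringD(4))

lemma polys_over_pderiv:
  "is_subring S \<Longrightarrow> p \<in> polys_over S \<Longrightarrow> pderiv p \<in> polys_over S"
  for p :: "'b::{comm_ring_1,semiring_no_zero_divisors} poly"
  by (auto simp: polys_over_def coeff_pderiv simp del: of_nat_Suc intro!: subringD(4) subring_of_nat)

lemma polys_over_map_poly:
  "0 \<in> T \<Longrightarrow> h 0 = 0 \<Longrightarrow> (\<And>x. x \<in> S \<Longrightarrow> h x \<in> T) \<Longrightarrow> p \<in> polys_over S \<Longrightarrow> map_poly h p \<in> polys_over T"
  by (simp add: polys_over_def coeff_map_poly)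

lemma sum_coeff_upto: "degree p \<le> N \<Longrightarrow> (\<Sum>i\<le>N. coeff p i * h i) = (\<Sum>i\<le>degree p. coeff p i * h i)"
  for p :: "'b::semiring_0 poly"
  by (rule sum.mono_neutral_right) (auto simp: coeff_eq_0)

lemma coeff_sum_monom: "coeff (\<Sum>i\<le>(n::nat). monom (c i) i) j = (if j \<le> n then c j else 0)"
  by (simp add: coeff_sum coeff_monom)

lemma poly_eq_sum_upto: "degree p \<le> N \<Longrightarrow> poly p x = (\<Sum>i\<le>N. coeff p i * x ^ i)"
  for p :: "'b::comm_semiring_1 poly"
  using sum_coeff_upto[of p N "\<lambda>i. x ^ i"] by (simp add: poly_altdef)

lemma poly_in_subring:
  assumes S: "is_subring S" and T: "T \<subseteq> S" and p: "p \<in> polys_over T" and x: "x \<in> S"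
  shows "poly p x \<in> S"
  unfolding poly_altdef using polys_overD[OF p] T x
  by (auto intro!: subring_sum[OF S] subringD(4)[OF S] subring_power[OF S])

lemma polys_over_synthetic_div:
  assumes S: "is_subring S" and c: "c \<in> S"
  shows "p \<in> polys_over S \<Longrightarrow> synthetic_div p c \<in> polys_over S"
proof (induction p)
  case (pCons a p)
  then have "p \<in> polys_over S" using polys_over_pCons subringD(1)[OF S] by blast
  then show ?case
    using pCons.IH poly_in_subring[OF S order_refl _ c] polys_over_pCons subringD(1)[OF S] by auto
qed simp

lemma zero_in_if_polys_over: "p \<in> polys_over T \<Longrightarrow> 0 \<in> T"
  using polys_overD[of p T "Suc (degree p)"] by (simp add: coeff_eq_0)

lemma polys_over_mono: "T \<subseteq> S \<Longrightarrow> polys_over T \<subseteq> polys_over S"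
  by (auto simp: polys_over_def)

lemma root_in_subfield:
  assumes k: "is_subfield k" and k_closed: "alg_closed_subfield k"
  shows "p \<in> polys_over k \<Longrightarrow> p \<noteq> 0 \<Longrightarrow> poly p z = 0 \<Longrightarrow> z \<in> k"
proof (induction "degree p" arbitrary: p rule: less_induct)
  case less
  show ?case
  proof (cases "degree p = 0")
    case True
    then show ?thesis using less.prems by (auto elim: degree_eq_zeroE)
  next
    case False
    then obtain l where l: "l \<in> k" "poly p l = 0"
      using k_closed less.prems(1) unfolding alg_closed_subfield_def polys_over_def by auto
    define q where "q = synthetic_div p l"
    have pq: "p = [:-l, 1:] * q" using synthetic_div_correct'[of l p] l(2) by (simp add: q_def)
    have q: "q \<in> polys_over k"
      unfolding q_def
      by (rule polys_over_synthetic_div[OF subfield_imp_subring[OF k] l(1) less.prems(1)])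
    have "degree q < degree p" using False by (simp add: q_def degree_synthetic_div)
    moreover have "q \<noteq> 0" using pq less.prems(2) by auto
    moreover have "z = l \<or> poly q z = 0" using less.prems(3) by (auto simp: pq)
    ultimately show ?thesis using less.hyps q l(1) by blast
  qed
qed

lemma homogeneous_system_eliminate:
  fixes M :: "'i \<Rightarrow> 'j \<Rightarrow> 'a::field"
  assumes S: "is_subfield S" and I: "finite I" "i0 \<in> I" and pivot: "M i0 j0 \<noteq> 0"
    and M: "\<And>i j. i \<in> I \<Longrightarrow> j \<in> insert j0 J \<Longrightarrow> M i j \<in> S"
    and c': "\<forall>i\<in>I - {i0}. c' i \<in> S" "\<exists>i\<in>I - {i0}. c' i \<noteq> 0"
      "\<forall>j\<in>J. (\<Sum>i\<in>I - {i0}. c' i * (M i j - M i j0 / M i0 j0 * M i0 j)) = 0"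
  shows "\<exists>c. (\<forall>i\<in>I. c i \<in> S) \<and> (\<exists>i\<in>I. c i \<noteq> 0) \<and> (\<forall>j\<in>insert j0 J. (\<Sum>i\<in>I. c i * M i j) = 0)"
proof -
  note SR = subringD[OF subfield_imp_subring[OF S]]
  define s where "s = (\<Sum>i\<in>I - {i0}. c' i * M i j0)"
  define c where "c i = (if i = i0 then - s / M i0 j0 else c' i)" for i
  have sum_c: "(\<Sum>i\<in>I. c i * M i j) = - s / M i0 j0 * M i0 j + (\<Sum>i\<in>I - {i0}. c' i * M i j)" for j
    using I unfolding c_def by (simp add: sum.remove[of I i0])
  have "s \<in> S" unfolding s_def using c'(1) M
    by (intro subring_sum[OF subfield_imp_subring[OF S]] SR) auto
  then have "\<forall>i\<in>I. c i \<in> S" using c'(1) I(2) M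
    by (auto simp: c_def intro!: SR subfield_divide[OF S])
  moreover have "\<exists>i\<in>I. c i \<noteq> 0" using c'(2) by (auto simp: c_def)
  moreover have "(\<Sum>i\<in>I. c i * M i j) = 0" if j: "j \<in> insert j0 J" for j
  proof (cases "j = j0")
    case True
    then show ?thesis using sum_c[of j0] pivot by (simp add: s_def)
  next
    case False
    then have "(\<Sum>i\<in>I - {i0}. c' i * M i j) - s / M i0 j0 * M i0 j = 0"
      using c'(3) j unfolding s_def
      by (simp add: algebra_simps sum_subtractf sum_distrib_left sum_divide_distrib sum_distrib_right)
    then show ?thesis using sum_c[of j] by simp
  qed
  ultimately show ?thesis by blast
qed

lemma homogeneous_system_nontrivial_solution:
  fixes M :: "'i \<Rightarrow> 'j \<Rightarrow> 'a::field"
  assumes S: "is_subfield S" and J: "finite J"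
  shows "finite I \<Longrightarrow> card J < card I \<Longrightarrow> (\<And>i j. i \<in> I \<Longrightarrow> j \<in> J \<Longrightarrow> M i j \<in> S) \<Longrightarrow>
     \<exists>c. (\<forall>i\<in>I. c i \<in> S) \<and> (\<exists>i\<in>I. c i \<noteq> 0) \<and> (\<forall>j\<in>J. (\<Sum>i\<in>I. c i * M i j) = 0)"
  using J
proof (induction J arbitrary: I M rule: finite_induct)
  case empty
  then obtain i0 where "i0 \<in> I" by fastforce
  then show ?case using S unfolding is_subfield_def
    by (intro exI[of _ "\<lambda>i. if i = i0 then 1 else 0"]) auto
next
  case (insert j0 J)
  show ?case
  proof (cases "\<forall>i\<in>I. M i j0 = 0")
    case True
    have "card J < card I" using insert by simp
    then obtain c where c: "\<forall>i\<in>I. c i \<in> S" "\<exists>i\<in>I. c i \<noteq> 0" "\<forall>j\<in>J. (\<Sum>i\<in>I. c i * M i j) = 0"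
      using insert.IH[OF insert.prems(1)] insert.prems(3) by blast
    then show ?thesis using True by (intro exI[of _ c]) auto
  next
    case False
    then obtain i0 where i0: "i0 \<in> I" "M i0 j0 \<noteq> 0" by blast
    have "card J < card (I - {i0})" using insert.prems(1,2) insert.hyps i0
      by (simp add: card_Diff_singleton)
    moreover have "M i j - M i j0 / M i0 j0 * M i0 j \<in> S" if "i \<in> I - {i0}" "j \<in> J" for i j
      using that i0 insert.prems(3) subringD[OF subfield_imp_subring[OF S]] subfield_divide[OF S]
      by auto
    ultimately obtain c' where "\<forall>i\<in>I - {i0}. c' i \<in> S" "\<exists>i\<in>I - {i0}. c' i \<noteq> 0"
        "\<forall>j\<in>J. (\<Sum>i\<in>I - {i0}. c' i * (M i j - M i j0 / M i0 j0 * M i0 j)) = 0"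
      using insert.IH[of "I - {i0}" "\<lambda>i j. M i j - M i j0 / M i0 j0 * M i0 j"] insert.prems(1)
      by auto
    then show ?thesis
      using homogeneous_system_eliminate[of S I i0 M j0 J, OF S insert.prems(1) i0 insert.prems(3)]
      by blast
  qed
qed

lemma pseudo_divmod_polys_over:
  assumes R: "is_subring R" and p: "p \<in> polys_over R" and q: "q \<in> polys_over R"
  shows "fst (pseudo_divmod p q) \<in> polys_over R \<and> snd (pseudo_divmod p q) \<in> polys_over R"
proof -
  note RX = subringD[OF subring_polys_over[OF R]]
  have "pseudo_divmod_main lc s r q dr n \<in> polys_over R \<times> polys_over R"
    if "lc \<in> R" "s \<in> polys_over R" "r \<in> polys_over R" for lc s r dr n
    using that
  proof (induction n arbitrary: s r dr)
    case (Suc n)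
    have "monom (coeff r dr) n \<in> polys_over R"
      using Suc.prems subringD(1)[OF R] by (intro polys_over_monom polys_overD)
    then show ?case using Suc q by (simp add: Let_def RX polys_over_smult[OF R])
  qed simp
  then show ?thesis
    using p q RX(1) polys_overD[OF q] by (simp add: pseudo_divmod_def mem_Times_iff)
qed

definition derivation_on :: "'b::comm_ring_1 set \<Rightarrow> ('b \<Rightarrow> 'b) \<Rightarrow> bool" where
  "derivation_on S d \<longleftrightarrow> (\<forall>x\<in>S. \<forall>y\<in>S. d (x + y) = d x + d y \<and> d (x * y) = x * d y + d x * y)"

lemma derivation_onD:
  assumes "derivation_on S d" "x \<in> S" "y \<in> S"
  shows "d (x + y) = d x + d y" "d (x * y) = x * d y + d x * y"
  using assms unfolding derivation_on_def by auto

lemma is_derivation_imp_derivation_on: "is_derivation K D \<Longrightarrow> derivation_on K D"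
  unfolding is_derivation_def derivation_on_def by auto

lemma derivation_on_subset: "derivation_on S d \<Longrightarrow> T \<subseteq> S \<Longrightarrow> derivation_on T d"
  unfolding derivation_on_def by blast

context
  fixes S :: "'b::idom set" and d
  assumes S: "is_subring S" and d: "derivation_on S d"
begin

lemma derivation_zero: "d 0 = 0"
  using derivation_onD(1)[OF d subringD(1)[OF S] subringD(1)[OF S]]
  by (metis add_cancel_right_right add_0)

lemma derivation_one: "d 1 = 0"
  using derivation_onD(2)[OF d subringD(2)[OF S] subringD(2)[OF S]]
  by (metis add_cancel_right_right mult_1 mult_1_right)

lemma derivation_minus: "x \<in> S \<Longrightarrow> d (- x) = - d x"
  using derivation_onD(1)[OF d, of x "- x"] subringD(5)[OF S, of x] derivation_zero
  by (simp add: eq_neg_iff_add_eq_0 add.commute)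

lemma derivation_diff: "x \<in> S \<Longrightarrow> y \<in> S \<Longrightarrow> d (x - y) = d x - d y"
  using derivation_onD(1)[OF d, of x "- y"] subringD(5)[OF S, of y] derivation_minus[of y] by simp

lemma derivation_sum: "(\<And>i. i \<in> A \<Longrightarrow> f i \<in> S) \<Longrightarrow> d (sum f A) = (\<Sum>i\<in>A. d (f i))"
proof (induction A rule: infinite_finite_induct)
  case (insert x F)
  have "sum f F \<in> S" using insert.prems by (intro subring_sum[OF S]) auto
  then show ?case using insert derivation_onD(1)[OF d, of "f x" "sum f F"] by simp
qed (simp_all add: derivation_zero)

lemma derivation_power: "x \<in> S \<Longrightarrow> d (x ^ n) = of_nat n * x ^ (n - 1) * d x"
proof (induction n)
  case (Suc n)
  have "d (x ^ Suc n) = x * d (x ^ n) + d x * x ^ n"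
    using derivation_onD(2)[OF d Suc.prems subring_power[OF S Suc.prems]] by simp
  then show ?case using Suc by (cases n) (simp_all add: algebra_simps)
qed (simp add: derivation_one)

lemma derivation_poly:
  assumes T: "T \<subseteq> S" and c: "c \<in> polys_over T" and x: "x \<in> S"
  shows "d (poly c x) = poly (map_poly d c) x + poly (pderiv c) x * d x"
  using c
proof (induction c)
  case (pCons a p)
  then have a: "a \<in> S" and p: "p \<in> polys_over T"
    using polys_over_pCons[OF zero_in_if_polys_over[OF pCons.prems]] T by auto
  have "d (poly (pCons a p) x) = d a + (x * d (poly p x) + d x * poly p x)"
    using derivation_onD[OF d] poly_in_subring[OF S T p x] a x subringD[OF S] by simp
  then show ?case
    using pCons.IH[OF p] by (simp add: map_poly_pCons derivation_zero pderiv_pCons algebra_simps)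
qed (simp add: derivation_zero)

end

lemma derivation_divide:
  assumes S: "is_subfield S" and d: "derivation_on S d" and x: "x \<in> S" and y: "y \<in> S" "y \<noteq> 0"
  shows "d (x / y) = (d x * y - x * d y) / y\<^sup>2"
proof -
  have "d x = d ((x / y) * y)" using y by simp
  also have "\<dots> = (x / y) * d y + d (x / y) * y"
    by (rule derivation_onD(2)[OF d subfield_divide[OF S x y(1)] y(1)])
  finally show ?thesis using y(2) by (simp add: field_simps power2_eq_square)
qed

lemma derivation_on_commutator:
  assumes S: "is_subring S" and d1: "derivation_on S d1" and d2: "derivation_on S d2"
    and d1_S: "\<And>x. x \<in> S \<Longrightarrow> d1 x \<in> S" and d2_S: "\<And>x. x \<in> S \<Longrightarrow> d2 x \<in> S"
  shows "derivation_on S (\<lambda>z. d1 (d2 z) - d2 (d1 z))"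
  unfolding derivation_on_def
proof (intro ballI conjI)
  fix x y assume x: "x \<in> S" and y: "y \<in> S"
  note closed = subringD[OF S] d1_S d2_S x y
  show "d1 (d2 (x + y)) - d2 (d1 (x + y)) = d1 (d2 x) - d2 (d1 x) + (d1 (d2 y) - d2 (d1 y))"
    using closed by (simp add: derivation_onD[OF d1] derivation_onD[OF d2])
  have "d1 (d2 (x * y)) = x * d1 (d2 y) + d1 x * d2 y + (d2 x * d1 y + d1 (d2 x) * y)"
    using closed by (simp add: derivation_onD[OF d1] derivation_onD[OF d2])
  moreover have "d2 (d1 (x * y)) = x * d2 (d1 y) + d2 x * d1 y + (d1 x * d2 y + d2 (d1 x) * y)"
    using closed by (simp add: derivation_onD[OF d1] derivation_onD[OF d2])
  ultimately show "d1 (d2 (x * y)) - d2 (d1 (x * y))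
      = x * (d1 (d2 y) - d2 (d1 y)) + (d1 (d2 x) - d2 (d1 x)) * y"
    by (simp add: algebra_simps)
qed

text \<open>A polynomial \<open>P\<close> in \<open>k[X][Y]\<close> is evaluated at \<open>X = x\<close>, \<open>Y = y\<close>; thus \<open>pderiv P\<close> is
  \<open>\<partial>P/\<partial>Y\<close> and \<open>map_poly pderiv P\<close> is \<open>\<partial>P/\<partial>X\<close>.\<close>

definition poly2 :: "'b::comm_ring_1 poly poly \<Rightarrow> 'b \<Rightarrow> 'b \<Rightarrow> 'b" where
  "poly2 P x y = poly (poly P [:y:]) x"

lemma poly2_pCons [simp]: "poly2 (pCons c P) x y = poly c x + y * poly2 P x y"
  and poly2_0 [simp]: "poly2 0 x y = 0"
  and poly2_1 [simp]: "poly2 1 x y = 1"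
  and poly2_add [simp]: "poly2 (P + Q) x y = poly2 P x y + poly2 Q x y"
  and poly2_diff [simp]: "poly2 (P - Q) x y = poly2 P x y - poly2 Q x y"
  and poly2_minus [simp]: "poly2 (- P) x y = - poly2 P x y"
  and poly2_mult [simp]: "poly2 (P * Q) x y = poly2 P x y * poly2 Q x y"
  and poly2_smult [simp]: "poly2 (smult c P) x y = poly c x * poly2 P x y"
  and poly2_const [simp]: "poly2 [:c:] x y = poly c x"
  and poly2_power [simp]: "poly2 (P ^ n) x y = poly2 P x y ^ n"
  and poly2_monom [simp]: "poly2 (monom c n) x y = poly c x * y ^ n"
  by (simp_all add: poly2_def poly_monom)

lemma poly2_sum: "poly2 (sum F A) x y = (\<Sum>i\<in>A. poly2 (F i) x y)"
  by (induction A rule: infinite_finite_induct) simp_all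

lemma poly2_altdef: "poly2 P x y = (\<Sum>j\<le>degree P. poly (coeff P j) x * y ^ j)"
  by (subst poly_as_sum_of_monoms[symmetric]) (simp add: poly2_sum)

lemma poly2_in_subring:
  assumes S: "is_subring S" and T: "T \<subseteq> S" and P: "P \<in> polys_over (polys_over T)"
    and x: "x \<in> S" and y: "y \<in> S"
  shows "poly2 P x y \<in> S"
proof -
  have "poly P [:y:] \<in> polys_over S"
    using poly_in_subring[OF subring_polys_over[OF S] polys_over_mono[OF T] P]
      polys_over_const[OF subringD(1)[OF S] y] by blast
  then show ?thesis unfolding poly2_def by (rule poly_in_subring[OF S order_refl _ x])
qed

lemma derivation_poly2:
  fixes S :: "'b::idom set"
  assumes S: "is_subring S" and d: "derivation_on S d"
    and T: "T \<subseteq> S" and P: "P \<in> polys_over (polys_over T)" and x: "x \<in> S" and y: "y \<in> S"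
  shows "d (poly2 P x y) = poly2 (map_poly (map_poly d) P) x y + poly2 (map_poly pderiv P) x y * d x
            + poly2 (pderiv P) x y * d y"
  using P
proof (induction P)
  case (pCons c P)
  then have c: "c \<in> polys_over T" and P: "P \<in> polys_over (polys_over T)"
    using polys_over_pCons[OF zero_in_if_polys_over[OF pCons.prems]] by auto
  have "d (poly2 (pCons c P) x y) = d (poly c x) + (y * d (poly2 P x y) + d y * poly2 P x y)"
    using derivation_onD[OF d] poly2_in_subring[OF S T P x y] poly_in_subring[OF S T c x] y subringD[OF S]
    by simp
  then show ?case
    using pCons.IH[OF P] derivation_poly[OF S d T c x]
    by (simp add: map_poly_pCons derivation_zero[OF S d] pderiv_pCons algebra_simps)
qed (simp add: derivation_zero[OF S d])

lemma map_pderiv_add: "map_poly pderiv (P + R) = map_poly pderiv P + map_poly pderiv R"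
  for P R :: "'b::idom poly poly"
  by (rule poly_eqI) (simp add: coeff_map_poly pderiv_add)

lemma map_pderiv_diff: "map_poly pderiv (P - R) = map_poly pderiv P - map_poly pderiv R"
  for P R :: "'b::idom poly poly"
  by (rule poly_eqI) (simp add: coeff_map_poly pderiv_diff)

lemma map_pderiv_mult:
  "map_poly pderiv (P * R) = map_poly pderiv P * R + P * map_poly pderiv (R :: 'b::idom poly poly)"
proof (rule poly_eqI)
  fix n
  have "coeff (map_poly pderiv (P * R)) n
      = (\<Sum>i\<le>n. pderiv (coeff P i) * coeff R (n - i)) + (\<Sum>i\<le>n. coeff P i * pderiv (coeff R (n - i)))"
    by (simp add: coeff_map_poly coeff_mult pderiv_mult sum.distrib mult.commute
        higher_pderiv_sum[of 1, simplified])
  then show "coeff (map_poly pderiv (P * R)) n = coeff (map_poly pderiv P * R + P * map_poly pderiv R) n"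
    by (simp only: coeff_add coeff_mult coeff_map_poly pderiv_0)
qed

lemma map_poly2_eq_0:
  assumes "\<And>c. c \<in> T \<Longrightarrow> d c = 0" "d 0 = 0" "P \<in> polys_over (polys_over T)"
  shows "map_poly (map_poly d) P = 0"
proof (rule poly_eqI)
  fix n
  have "map_poly d (coeff P n) = 0"
    using assms polys_overD[OF polys_overD[OF assms(3)]]
    by (intro poly_eqI) (simp add: coeff_map_poly)
  then show "coeff (map_poly (map_poly d) P) n = coeff 0 n"
    by (simp add: coeff_map_poly assms(2))
qed

section \<open>The Euler Wronskian\<close>

text \<open>\<open>euler_wronskian p q = q\<^sup>2 X (p/q)'\<close>, the Wronskian for the Euler derivation \<open>X d/dX\<close>.\<close>

definition euler_wronskian :: "'b::field_char_0 poly \<Rightarrow> 'b poly \<Rightarrow> 'b poly" where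
  "euler_wronskian p q = [:0, 1:] * (pderiv p * q - p * pderiv q)"

lemma coeff_pderiv_mult_top:
  fixes p q :: "'b::field_char_0 poly"
  assumes "degree p + degree q \<ge> 1"
  shows "coeff (pderiv p * q) (degree p + degree q - 1) = of_nat (degree p) * lead_coeff p * lead_coeff q"
proof (cases "degree p = 0")
  case True
  then have "pderiv p = 0" by (simp add: pderiv_eq_0_iff)
  then show ?thesis using True by simp
next
  case False
  then have d: "degree (pderiv p) = degree p - 1" by (simp add: degree_pderiv)
  have "coeff (pderiv p * q) (degree p + degree q - 1) = coeff (pderiv p * q) (degree (pderiv p) + degree q)"
    using False d by (metis Nat.add_diff_assoc2 One_nat_def Suc_leI neq0_conv)
  also have "\<dots> = lead_coeff (pderiv p) * lead_coeff q" by (rule coeff_mult_degree_sum)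
  also have "lead_coeff (pderiv p) = of_nat (degree p) * lead_coeff p"
    using False d by (simp add: coeff_pderiv)
  finally show ?thesis by simp
qed

lemma degree_pderiv_mult_le:
  fixes p q :: "'b::field_char_0 poly"
  shows "degree (pderiv p * q) \<le> degree p + degree q - 1"
proof (cases "degree p = 0")
  case True
  then have "pderiv p = 0" by (simp add: pderiv_eq_0_iff)
  then show ?thesis by simp
next
  case False
  then show ?thesis using degree_mult_le[of "pderiv p" q] by (simp add: degree_pderiv)
qed

lemma degree_euler_wronskian: "degree (euler_wronskian p q) \<le> degree p + degree q"
  for p q :: "'b::field_char_0 poly"
proof -
  have "degree (pderiv p * q - p * pderiv q) \<le> degree p + degree q - 1"
    using degree_pderiv_mult_le[of p q] degree_pderiv_mult_le[of q p]
    by (intro degree_diff_le) (auto simp: mult.commute add.commute)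
  moreover have "degree (euler_wronskian p q) \<le> degree [:0,1::'b:] + degree (pderiv p * q - p * pderiv q)"
    unfolding euler_wronskian_def by (rule degree_mult_le)
  moreover have "degree [:0,1::'b:] = 1" by simp
  moreover have "euler_wronskian p q = 0" if "degree p + degree q = 0"
  proof -
    have "pderiv p = 0" "pderiv q = 0" using that by (simp_all add: pderiv_eq_0_iff)
    then show ?thesis by (simp add: euler_wronskian_def)
  qed
  ultimately show ?thesis by (cases "degree p + degree q = 0") auto
qed

lemma coeff_euler_wronskian_top:
  "coeff (euler_wronskian p q) (degree p + degree q)
    = (of_nat (degree p) - of_nat (degree q)) * lead_coeff p * lead_coeff q"
  for p q :: "'b::field_char_0 poly"
proof (cases "degree p + degree q = 0")
  case True
  then have "pderiv p = 0" "pderiv q = 0" by (simp_all add: pderiv_eq_0_iff)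
  then show ?thesis using True by (simp add: euler_wronskian_def)
next
  case False
  then obtain n where n: "degree p + degree q = Suc n" by (metis not0_implies_Suc)
  have "coeff (euler_wronskian p q) (degree p + degree q) = coeff (pderiv p * q - p * pderiv q) n"
    unfolding euler_wronskian_def n by simp
  also have "\<dots> = coeff (pderiv p * q) (degree p + degree q - 1) - coeff (pderiv q * p) (degree q + degree p - 1)"
    using n by (simp only: coeff_diff mult.commute[of p "pderiv q"] add.commute[of "degree q"]) simp
  also have "\<dots> = of_nat (degree p) * lead_coeff p * lead_coeff q - of_nat (degree q) * lead_coeff q * lead_coeff p"
  proof -
    have ge: "1 \<le> degree p + degree q" "1 \<le> degree q + degree p" using False by auto
    show ?thesis using coeff_pderiv_mult_top[OF ge(1)] coeff_pderiv_mult_top[OF ge(2)] by simp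
  qed
  also have "\<dots> = (of_nat (degree p) - of_nat (degree q)) * lead_coeff p * lead_coeff q"
    by (simp add: algebra_simps)
  finally show ?thesis .
qed

lemma euler_wronskian_diff: "euler_wronskian (p - r) q = euler_wronskian p q - euler_wronskian r q"
  by (simp add: euler_wronskian_def pderiv_diff algebra_simps)

lemma euler_wronskian_smult_self: "euler_wronskian (smult c q) q = 0"
  by (simp add: euler_wronskian_def pderiv_smult mult.commute)

lemma euler_wronskian_0: "euler_wronskian 0 q = 0" by (simp add: euler_wronskian_def)

lemma euler_wronskian_eq_smult_mult:
  fixes p q :: "'b::field_char_0 poly"
  assumes "p \<noteq> 0" "q \<noteq> 0" "euler_wronskian p q = smult m (p * q)"
  shows "m = of_nat (degree p) - of_nat (degree q)"
proof -
  have "coeff (euler_wronskian p q) (degree p + degree q) = m * (lead_coeff p * lead_coeff q)"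
    using assms(3) coeff_mult_degree_sum[of p q] by simp
  then show ?thesis using coeff_euler_wronskian_top[of p q] assms(1,2) by (simp add: mult.assoc)
qed

lemma euler_wronskian_ne_smult_square:
  fixes p q :: "'b::field_char_0 poly"
  assumes q: "q \<noteq> 0" and c: "c \<noteq> 0"
  shows "euler_wronskian p q \<noteq> smult c (q * q)"
proof (induction "degree p" arbitrary: p rule: less_induct)
  case less
  show ?case
  proof
    assume eq: "euler_wronskian p q = smult c (q * q)"
    then have "p \<noteq> 0" using q c by (auto simp: euler_wronskian_0)
    have deg_W: "degree (euler_wronskian p q) = degree q + degree q" using eq q c
      by (simp add: degree_mult_eq)
    have "degree p = degree q"
    proof (rule ccontr)
      assume "degree p \<noteq> degree q"
      then have "coeff (euler_wronskian p q) (degree p + degree q) \<noteq> 0"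
        using \<open>p \<noteq> 0\<close> q by (simp add: coeff_euler_wronskian_top)
      then have "degree p + degree q \<le> degree q + degree q" using deg_W le_degree by metis
      moreover have "degree q + degree q \<le> degree p + degree q" using deg_W degree_euler_wronskian
        by metis
      ultimately show False using \<open>degree p \<noteq> degree q\<close> by simp
    qed
    \<comment> \<open>Cancel the leading term of \<open>p\<close> against \<open>q\<close>; this does not change the Wronskian.\<close>
    define p1 where "p1 = p - smult (lead_coeff p / lead_coeff q) q"
    have W1: "euler_wronskian p1 q = euler_wronskian p q"
      by (simp add: p1_def euler_wronskian_diff euler_wronskian_smult_self)
    then have "p1 \<noteq> 0" using eq q c by (auto simp: euler_wronskian_0)
    moreover have "degree p1 \<le> degree p" "coeff p1 (degree p) = 0"
      using \<open>degree p = degree q\<close> q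
      by (auto simp: p1_def intro!: degree_diff_le simp: degree_smult_le)
    ultimately have "degree p1 < degree p" by (intro degree_less_if_less_eqI)
    then show False using less.hyps eq W1 by metis
  qed
qed

lemma euler_wronskian_eq_0_proportional:
  fixes p q :: "'b::field_char_0 poly"
  assumes q: "q \<noteq> 0" and W: "euler_wronskian p q = 0"
  shows "p = smult (lead_coeff p / lead_coeff q) q"
proof (cases "p = 0")
  case True then show ?thesis by simp
next
  case False
  have "(0::'b) = of_nat (degree p) - of_nat (degree q)"
    using euler_wronskian_eq_smult_mult[OF False q, of 0] W by simp
  then have dpq: "degree p = degree q" by simp
  define p1 where "p1 = p - smult (lead_coeff p / lead_coeff q) q"
  have W1: "euler_wronskian p1 q = 0" unfolding p1_def using W
    by (simp add: euler_wronskian_diff euler_wronskian_smult_self)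
  have c1: "coeff p1 (degree q) = 0" using dpq q by (simp add: p1_def)
  have d1: "degree p1 \<le> degree q" unfolding p1_def using dpq
    by (intro degree_diff_le) (auto simp: degree_smult_le)
  show ?thesis
  proof (rule ccontr)
    assume "p \<noteq> smult (lead_coeff p / lead_coeff q) q"
    then have "p1 \<noteq> 0" by (simp add: p1_def)
    then have "degree p1 < degree q" by (rule degree_less_if_less_eqI[OF d1 c1])
    moreover have "(0::'b) = of_nat (degree p1) - of_nat (degree q)"
      using euler_wronskian_eq_smult_mult[OF \<open>p1 \<noteq> 0\<close> q, of 0] W1 by simp
    ultimately show False by simp
  qed
qed

text \<open>The derivation of \<open>k[X][Y]\<close> with \<open>X \<mapsto> X\<close> and \<open>Y \<mapsto> l Y + m\<close>, trivial on \<open>k\<close>.\<close>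

definition delta_lift :: "'b::idom \<Rightarrow> 'b \<Rightarrow> 'b poly poly \<Rightarrow> 'b poly poly" where
  "delta_lift l m P =
    smult [:0, 1:] (map_poly pderiv P) + smult [:m:] (pderiv P) + smult [:l:] (pCons 0 (pderiv P))"

lemma poly2_delta_lift:
  "poly2 (delta_lift l m P) x y = x * poly2 (map_poly pderiv P) x y + poly2 (pderiv P) x y * (l * y + m)"
  by (simp add: delta_lift_def algebra_simps)

lemma coeff_delta_lift:
  fixes P :: "'b::idom poly poly"
  shows "coeff (delta_lift l m P) j = [:0, 1:] * pderiv (coeff P j) + smult (m * of_nat (Suc j)) (coeff P (Suc j))
    + smult (l * of_nat j) (coeff P j)"
  by (cases j)
    (simp_all add: delta_lift_def coeff_map_poly coeff_pderiv of_nat_poly smult_smult mult_ac del: of_nat_Suc)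

lemma degree_delta_lift: "degree (delta_lift l m (P :: 'b::idom poly poly)) \<le> degree P"
  by (rule degree_le) (simp add: coeff_delta_lift coeff_eq_0)

lemma euler_wronskian_if_delta_lift:
  fixes P :: "'b::field_char_0 poly poly"
  assumes "lead_coeff P * coeff (delta_lift l m P) j = coeff (delta_lift l m P) (degree P) * coeff P j"
  shows "euler_wronskian (coeff P j) (lead_coeff P) + smult (l * of_nat j) (coeff P j * lead_coeff P)
      + smult (m * of_nat (Suc j)) (coeff P (Suc j) * lead_coeff P)
    = smult (l * of_nat (degree P)) (coeff P j * lead_coeff P)"
proof -
  have "coeff P (Suc (degree P)) = 0" by (simp add: coeff_eq_0)
  with assms show ?thesis
    by (simp add: coeff_delta_lift euler_wronskian_def algebra_simps del: of_nat_Suc mult_pCons_left)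
qed

section \<open>Laurent polynomials\<close>

lemma if_mult_left_zero: "(if P then x else 0) * y = (if P then x * y else (0::'b::mult_zero))"
  by simp

lemma in_laurent_monomial:
  assumes "0 \<in> k" "c \<in> k"
  shows "in_laurent k \<theta> (c * \<theta> powi e)"
proof -
  have "(\<Sum>i\<in>{- int (nat \<bar>e\<bar>)..int (nat \<bar>e\<bar>)}. (if i = e then c else 0) * \<theta> powi i) = c * \<theta> powi e"
    by (simp add: if_mult_left_zero sum.delta') arith
  then show ?thesis unfolding in_laurent_def using assms
    by (intro exI[of _ "nat \<bar>e\<bar>"] exI[of _ "\<lambda>i. if i = e then c else 0"]) auto
qed

lemma in_laurent_add:
  assumes k: "is_subring k" and x: "in_laurent k \<theta> x" and y: "in_laurent k \<theta> y"
  shows "in_laurent k \<theta> (x + y)"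
proof -
  obtain N c where c: "\<forall>i\<in>{-int N..int N}. c i \<in> k" "x = (\<Sum>i\<in>{-int N..int N}. c i * \<theta> powi i)"
    using x unfolding in_laurent_def by blast
  obtain N' c' where c': "\<forall>i\<in>{-int N'..int N'}. c' i \<in> k" "y = (\<Sum>i\<in>{-int N'..int N'}. c' i * \<theta> powi i)"
    using y unfolding in_laurent_def by blast
  define M where "M = max N N'"
  define b where
    "b i = (if i \<in> {-int N..int N} then c i else 0) + (if i \<in> {-int N'..int N'} then c' i else 0)"
    for i
  have restrict: "(\<Sum>i\<in>{-int M..int M}. (if i \<in> {-int n..int n} then h i else 0) * \<theta> powi i)
      = (\<Sum>i\<in>{-int n..int n}. h i * \<theta> powi i)" if "n \<le> M" for n and h :: "int \<Rightarrow> 'a"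
    using that by (intro sum.mono_neutral_cong_right) auto
  have "N \<le> M" "N' \<le> M" unfolding M_def by simp_all
  then have "x + y = (\<Sum>i\<in>{-int M..int M}. b i * \<theta> powi i)"
    unfolding b_def distrib_right sum.distrib c(2) c'(2) by (simp only: restrict)
  moreover have "b i \<in> k" for i using c(1) c'(1) subringD[OF k] by (simp add: b_def)
  ultimately show ?thesis unfolding in_laurent_def by blast
qed

lemma in_laurent_sum_list:
  "is_subring k \<Longrightarrow> (\<And>x. x \<in> set xs \<Longrightarrow> in_laurent k \<theta> x) \<Longrightarrow> in_laurent k \<theta> (sum_list xs)"
  by (induction xs)
    (auto intro: in_laurent_add in_laurent_monomial[where c = 0 and e = 0, simplified] subringD)

lemma in_laurent_inverse:
  assumes L: "in_laurent k \<theta> g"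
  shows "in_laurent k (inverse \<theta>) g"
proof -
  obtain N c where c: "\<forall>i\<in>{-int N..int N}. c i \<in> k" "g = (\<Sum>i\<in>{-int N..int N}. c i * \<theta> powi i)"
    using L unfolding in_laurent_def by blast
  have "g = (\<Sum>i\<in>{-int N..int N}. c (- i) * \<theta> powi (- i))"
    unfolding c(2) by (rule sum.reindex_bij_witness[of _ uminus uminus]) auto
  also have "\<dots> = (\<Sum>i\<in>{-int N..int N}. c (- i) * (inverse \<theta>) powi i)"
    by (simp add: power_int_minus power_int_inverse)
  finally show ?thesis unfolding in_laurent_def using c(1)
    by (intro exI[of _ N] exI[of _ "\<lambda>i. c (- i)"]) auto
qed

lemma in_laurent_imp_poly:
  assumes k: "is_subring k" and \<theta>: "\<theta> \<noteq> 0" and L: "in_laurent k \<theta> g"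
  obtains N G where "G \<in> polys_over k" "degree G \<le> 2 * N" "poly G \<theta> = \<theta> ^ N * g"
proof -
  obtain N c where c: "\<forall>i\<in>{-int N..int N}. c i \<in> k" "g = (\<Sum>i\<in>{-int N..int N}. c i * \<theta> powi i)"
    using L unfolding in_laurent_def by blast
  define G where "G = (\<Sum>i\<in>{-int N..int N}. monom (c i) (nat (i + int N)))"
  have coeff_G: "coeff G t = (\<Sum>i\<in>{-int N..int N}. if nat (i + int N) = t then c i else 0)" for t
    by (simp add: G_def coeff_sum coeff_monom)
  have "G \<in> polys_over k"
    using c(1) subringD(1)[OF k]
    by (intro polys_overI) (auto simp: coeff_G intro!: subring_sum[OF k])
  moreover have "degree G \<le> 2 * N"
    by (rule degree_le) (auto simp: coeff_G intro!: sum.neutral)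
  moreover have "poly G \<theta> = \<theta> ^ N * g"
  proof -
    have "\<theta> ^ nat (i + int N) = \<theta> ^ N * \<theta> powi i" if "i \<in> {-int N..int N}" for i
      using that \<theta> by (simp add: power_int_nonneg_exp[symmetric] power_int_add mult.commute)
    then show ?thesis by (simp add: G_def c(2) poly_sum poly_monom sum_distrib_left mult_ac)
  qed
  ultimately show ?thesis using that by blast
qed

lemma alg_dependent2_if_poly_values:
  assumes k: "is_subfield k" and u: "u \<noteq> 0" and B: "B < L * L + 2 * L"
    and P: "\<And>i j. i \<le> L \<Longrightarrow> j \<le> L \<Longrightarrow>
      P (i, j) \<in> polys_over k \<and> degree (P (i, j)) \<le> B \<and> poly (P (i, j)) \<theta> = u * (f ^ i * g ^ j)"
  shows "alg_dependent2 k f g"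
proof -
  define I where "I = {..L} \<times> {..L}"
  have P_I: "P ij \<in> polys_over k" "degree (P ij) \<le> B" "poly (P ij) \<theta> = u * (f ^ fst ij * g ^ snd ij)"
    if "ij \<in> I" for ij
    using that P[of "fst ij" "snd ij"] by (auto simp: I_def)
  have "finite I" "card {..B} < card I" using B
    by (simp_all add: I_def card_cartesian_product algebra_simps)
  then obtain C where C: "\<forall>ij\<in>I. C ij \<in> k" "\<exists>ij\<in>I. C ij \<noteq> 0"
      "\<forall>t\<in>{..B}. (\<Sum>ij\<in>I. C ij * coeff (P ij) t) = 0"
    using homogeneous_system_nontrivial_solution[OF k, of "{..B}" I "\<lambda>ij t. coeff (P ij) t"]
      polys_overD[OF P_I(1)] by blast
  have "u * (\<Sum>ij\<in>I. C ij * (f ^ fst ij * g ^ snd ij)) = (\<Sum>ij\<in>I. C ij * poly (P ij) \<theta>)"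
    using P_I(3) by (simp add: sum_distrib_left mult_ac)
  also have "\<dots> = (\<Sum>ij\<in>I. \<Sum>t\<le>B. C ij * coeff (P ij) t * \<theta> ^ t)"
    by (intro sum.cong refl) (simp add: poly_eq_sum_upto[OF P_I(2)] sum_distrib_left mult_ac)
  also have "\<dots> = (\<Sum>t\<le>B. (\<Sum>ij\<in>I. C ij * coeff (P ij) t) * \<theta> ^ t)"
    by (subst sum.swap) (simp add: sum_distrib_right)
  also have "\<dots> = 0" using C(3) by simp
  finally have "(\<Sum>ij\<in>I. C ij * (f ^ fst ij * g ^ snd ij)) = 0" using u by simp
  moreover have "(\<Sum>i\<le>L. \<Sum>j\<le>L. C (i, j) * f ^ i * g ^ j) = (\<Sum>ij\<in>I. C ij * (f ^ fst ij * g ^ snd ij))"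
    unfolding I_def by (simp add: sum.cartesian_product mult_ac case_prod_beta)
  ultimately show ?thesis unfolding alg_dependent2_def using C(1,2)
    by (intro exI[of _ L] exI[of _ "\<lambda>i j. C (i, j)"]) (auto simp: I_def)
qed

lemma root_power_laurent_imp_alg_dependent2:
  assumes k: "is_subfield k" and \<theta>: "\<theta> \<noteq> 0" and m: "m > 0" and f: "f = \<theta> ^ m"
    and L: "in_laurent k \<theta> g"
  shows "alg_dependent2 k f g"
proof -
  obtain N G where G: "G \<in> polys_over k" "degree G \<le> 2 * N" "poly G \<theta> = \<theta> ^ N * g"
    using in_laurent_imp_poly[OF subfield_imp_subring[OF k] \<theta> L] by blast
  define L where "L = m + 3 * N"
  \<comment> \<open>\<open>\<theta>\<^bsup>N L\<^esup> f\<^sup>i g\<^sup>j = \<theta>\<^bsup>m i + N (L - j)\<^esup> (\<theta>\<^sup>N g)\<^sup>j\<close> is a polynomial in \<open>\<theta>\<close> of degree at most \<open>L\<^sup>2\<close>.\<close>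
  define P where "P = (\<lambda>(i, j). monom (1::'a) (m * i + N * (L - j)) * G ^ j)"
  show ?thesis
  proof (rule alg_dependent2_if_poly_values[OF k _ _, of "\<theta> ^ (N * L)" "L * L" L P])
    fix i j assume i: "i \<le> L" and j: "j \<le> L"
    show "P (i, j) \<in> polys_over k \<and> degree (P (i, j)) \<le> L * L \<and>
        poly (P (i, j)) \<theta> = \<theta> ^ (N * L) * (f ^ i * g ^ j)"
    proof (intro conjI)
      note kX = subring_polys_over[OF subfield_imp_subring[OF k]]
      show "P (i, j) \<in> polys_over k" unfolding P_def
        by (auto intro!: subringD(4)[OF kX] polys_over_monom subring_power[OF kX] G(1)
            simp: subringD[OF subfield_imp_subring[OF k]])
      have "degree (G ^ j) \<le> j * (2 * N)"
        using degree_power_le[of G j] mult_le_mono2[OF G(2), of j] by (simp only: mult.commute)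
      then have "degree (P (i, j)) \<le> (m * i + N * (L - j)) + j * (2 * N)"
        unfolding P_def by (auto intro: order_trans[OF degree_mult_le add_mono[OF degree_monom_le]])
      also have "\<dots> \<le> L * L"
      proof -
        have "N * (L - j) + j * (2 * N) = N * L + N * j" using j
          by (simp add: diff_mult_distrib2 algebra_simps)
        moreover have "m * i \<le> m * L" "N * j \<le> N * L" using i j by simp_all
        moreover have "L * L = m * L + N * L + N * L + N * L" by (simp add: L_def algebra_simps)
        ultimately show ?thesis by linarith
      qed
      finally show "degree (P (i, j)) \<le> L * L" .
      have "poly (P (i, j)) \<theta> = \<theta> ^ (m * i) * \<theta> ^ (N * (L - j)) * (\<theta> ^ N * g) ^ j"
        by (simp add: P_def poly_monom G(3) power_add)
      also have "\<dots> = \<theta> ^ (m * i) * (\<theta> ^ (N * (L - j)) * \<theta> ^ (N * j)) * g ^ j"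
        by (simp add: power_mult_distrib power_mult[symmetric] mult_ac)
      also have "\<theta> ^ (N * (L - j)) * \<theta> ^ (N * j) = \<theta> ^ (N * L)"
        using j by (simp add: power_add[symmetric] diff_mult_distrib2[symmetric] add_mult_distrib2[symmetric])
      also have "\<theta> ^ (m * i) = f ^ i" by (simp add: f power_mult)
      finally show "poly (P (i, j)) \<theta> = \<theta> ^ (N * L) * (f ^ i * g ^ j)"
        by (simp add: mult_ac)
    qed
  qed (use \<theta> m in \<open>simp_all add: L_def\<close>)
qed

lemma laurent_imp_alg_dependent2:
  assumes k: "is_subfield k" and \<theta>: "\<theta> \<noteq> 0" and f: "f = \<theta> powi n" "f \<notin> k"
    and L: "in_laurent k \<theta> g"
  shows "alg_dependent2 k f g"
proof -
  have "n \<noteq> 0" using f k unfolding is_subfield_def by auto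
  then consider "n > 0" | "n < 0" by linarith
  then show ?thesis
  proof cases
    case 1
    then show ?thesis using root_power_laurent_imp_alg_dependent2[OF k \<theta> _ _ L, of "nat n"] f(1)
      by (simp add: power_int_def)
  next
    case 2
    then show ?thesis
      using root_power_laurent_imp_alg_dependent2[OF k _ _ _ in_laurent_inverse[OF L], of "nat (- n)"] \<theta> f(1)
      by (simp add: power_int_def)
  qed
qed

lemma satisfies_nonzero_hlde_normalized:
  assumes "satisfies_nonzero_hlde k D g"
  obtains m c where "\<forall>i\<le>m. c i \<in> k" "c m \<noteq> 0" "(\<Sum>i\<le>m. c i * (D ^^ i) g) = 0"
proof -
  obtain n c where c: "\<forall>i\<le>n. c i \<in> k" "\<exists>i\<le>n. c i \<noteq> 0" "(\<Sum>i\<le>n. c i * (D ^^ i) g) = 0"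
    using assms unfolding satisfies_nonzero_hlde_def by blast
  define m where "m = Max {i. i \<le> n \<and> c i \<noteq> 0}"
  have m: "m \<le> n" "c m \<noteq> 0" and above_m: "\<And>i. m < i \<Longrightarrow> i \<le> n \<Longrightarrow> c i = 0"
    using Max_in[of "{i. i \<le> n \<and> c i \<noteq> 0}"] Max_ge[of "{i. i \<le> n \<and> c i \<noteq> 0}"] c(2)
    by (fastforce simp: m_def)+
  have "(\<Sum>i\<le>n. c i * (D ^^ i) g) = (\<Sum>i\<le>m. c i * (D ^^ i) g)"
    using m(1) above_m by (intro sum.mono_neutral_right) auto
  then show ?thesis using that[of m c] c(1,3) m by auto
qed

locale differential_pair =
  fixes K k :: "'a::field set" and D :: "'a \<Rightarrow> 'a"
  assumes K: "differential_field K D"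
    and k: "differential_subfield k K D"
    and same_consts: "constants K D = constants k D"
begin

lemma K_subfield: "is_subfield K" and k_subfield: "is_subfield k" and k_subset_K: "k \<subseteq> K"
  using K k unfolding differential_field_def differential_subfield_def by auto

lemma K_subring: "is_subring K" and k_subring: "is_subring k"
  using subfield_imp_subring K_subfield k_subfield by auto

lemma subring_kX: "is_subring (polys_over k)"
  using subring_polys_over[OF k_subring] .

abbreviation kXY :: "'a poly poly set" where "kXY \<equiv> polys_over (polys_over k)"

lemma X_in_kX: "[:0, 1:] \<in> polys_over k"
  using subringD(1,2)[OF k_subring] subringD(1)[OF subring_kX]
  by (simp add: polys_over_pCons polys_over_const)

lemma subring_kXY: "is_subring kXY"
  using subring_polys_over[OF subring_kX] .

lemma D_derivation_on: "derivation_on K D"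
  using K is_derivation_imp_derivation_on unfolding differential_field_def by auto

lemma D_in_K: "x \<in> K \<Longrightarrow> D x \<in> K"
  using K unfolding differential_field_def is_derivation_def by auto

lemma D_pow_in_K: "x \<in> K \<Longrightarrow> (D ^^ i) x \<in> K"
  by (induction i) (auto intro: D_in_K)

lemma D_in_k: "x \<in> k \<Longrightarrow> D x \<in> k"
  using k unfolding differential_subfield_def by auto

lemma constant_in_k: "x \<in> K \<Longrightarrow> D x = 0 \<Longrightarrow> x \<in> k"
  using same_consts unfolding constants_def by blast

text \<open>A relation with coefficients in \<open>K\<close> among the first \<open>m\<close> rows of the Wronskian matrix of
  \<open>y 0, \<dots>, y m\<close>.\<close>

definition wronskian_relation :: "nat \<Rightarrow> (nat \<Rightarrow> 'a) \<Rightarrow> (nat \<Rightarrow> 'a) \<Rightarrow> bool" where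
  "wronskian_relation m y \<beta> \<longleftrightarrow>
     (\<forall>j\<le>m. \<beta> j \<in> K) \<and> (\<forall>i<m. (\<Sum>j\<le>m. \<beta> j * (D ^^ i) (y j)) = 0)"

lemma wronskian_relation_D:
  fixes c :: "nat \<Rightarrow> 'a"
  assumes cm: "c m \<noteq> 0" and yK: "\<forall>j\<le>m. y j \<in> K"
    and ysol: "\<forall>j\<le>m. (\<Sum>i\<le>m. c i * (D ^^ i) (y j)) = 0"
    and \<beta>: "wronskian_relation m y \<beta>"
  shows "wronskian_relation m y (\<lambda>j. D (\<beta> j))"
  unfolding wronskian_relation_def
proof (intro conjI allI impI)
  have \<beta>K: "\<beta> j \<in> K" if "j \<le> m" for j using \<beta> that by (simp add: wronskian_relation_def)
  have \<beta>rel: "(\<Sum>j\<le>m. \<beta> j * (D ^^ i) (y j)) = 0" if "i < m" for i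
    using \<beta> that by (simp add: wronskian_relation_def)
  have DyK: "(D ^^ i) (y j) \<in> K" if "j \<le> m" for i j using D_pow_in_K yK that by auto
  show "D (\<beta> j) \<in> K" if "j \<le> m" for j using \<beta>K[OF that] D_in_K by blast
  fix i assume i: "i < m"
  have "(\<Sum>j\<le>m. \<beta> j * (D ^^ Suc i) (y j)) = 0"
  proof (cases "Suc i < m")
    case True then show ?thesis using \<beta>rel by blast
  next
    case False
    then have m: "m = Suc i" using i by simp
    have "(D ^^ m) (y j) = - (\<Sum>l<m. c l * (D ^^ l) (y j)) / c m" if "j \<le> m" for j
      using ysol that cm
      by (simp add: lessThan_Suc_atMost[symmetric] field_simps eq_neg_iff_add_eq_0 add.commute)
    then have "(\<Sum>j\<le>m. \<beta> j * (D ^^ m) (y j)) = - (\<Sum>l<m. c l * (\<Sum>j\<le>m. \<beta> j * (D ^^ l) (y j))) / c m"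
      by (simp add: sum_divide_distrib sum_distrib_left sum_negf algebra_simps sum.swap[of _ "{..m}"])
    then show ?thesis using \<beta>rel m by simp
  qed
  moreover have "D (\<Sum>j\<le>m. \<beta> j * (D ^^ i) (y j)) = (\<Sum>j\<le>m. D (\<beta> j * (D ^^ i) (y j)))"
    using \<beta>K DyK
    by (intro derivation_sum[OF K_subring D_derivation_on] subringD(4)[OF K_subring]) auto
  moreover have "\<dots> = (\<Sum>j\<le>m. \<beta> j * (D ^^ Suc i) (y j)) + (\<Sum>j\<le>m. D (\<beta> j) * (D ^^ i) (y j))"
    using \<beta>K DyK by (simp add: derivation_onD(2)[OF D_derivation_on] sum.distrib)
  ultimately show "(\<Sum>j\<le>m. D (\<beta> j) * (D ^^ i) (y j)) = 0"
    using \<beta>rel[OF i] derivation_zero[OF K_subring D_derivation_on] by simp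
qed

lemma ode_solutions_dependent_over_k:
  fixes c :: "nat \<Rightarrow> 'a"
  assumes cm: "c m \<noteq> 0" and yK: "\<forall>j\<le>m. y j \<in> K"
    and ysol: "\<forall>j\<le>m. (\<Sum>i\<le>m. c i * (D ^^ i) (y j)) = 0"
  shows "\<exists>\<gamma>. (\<forall>j\<le>m. \<gamma> j \<in> k) \<and> (\<exists>j\<le>m. \<gamma> j \<noteq> 0) \<and> (\<Sum>j\<le>m. \<gamma> j * y j) = 0"
proof -
  define supp where "supp \<alpha> = {j. j \<le> m \<and> \<alpha> j \<noteq> 0}" for \<alpha> :: "nat \<Rightarrow> 'a"
  define nontrivial where "nontrivial \<alpha> \<longleftrightarrow> wronskian_relation m y \<alpha> \<and> supp \<alpha> \<noteq> {}" for \<alpha>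
  obtain \<alpha>0 where "\<forall>j\<in>{..m}. \<alpha>0 j \<in> K" "\<exists>j\<in>{..m}. \<alpha>0 j \<noteq> 0"
      "\<forall>i\<in>{..<m}. (\<Sum>j\<in>{..m}. \<alpha>0 j * (D ^^ i) (y j)) = 0"
    using homogeneous_system_nontrivial_solution[OF K_subfield, of "{..<m}" "{..m}" "\<lambda>j i. (D ^^ i) (y j)"]
      D_pow_in_K yK by auto
  then have "nontrivial \<alpha>0" by (auto simp: nontrivial_def wronskian_relation_def supp_def)
  then obtain \<alpha> where \<alpha>: "nontrivial \<alpha>" and min: "\<And>\<alpha>'. nontrivial \<alpha>' \<Longrightarrow> card (supp \<alpha>) \<le> card (supp \<alpha>')"
    using ex_has_least_nat[of nontrivial \<alpha>0 "\<lambda>\<alpha>. card (supp \<alpha>)"] by blast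
  \<comment> \<open>Normalise a relation of minimal support; its derivative has smaller support, so it vanishes.\<close>
  obtain j0 where j0: "j0 \<le> m" "\<alpha> j0 \<noteq> 0" using \<alpha> by (auto simp: nontrivial_def supp_def)
  define \<beta> where "\<beta> j = \<alpha> j / \<alpha> j0" for j
  have \<beta>: "wronskian_relation m y \<beta>"
    using \<alpha> j0 subfield_divide[OF K_subfield]
    by (auto simp: nontrivial_def wronskian_relation_def \<beta>_def sum_divide_distrib[symmetric])
  have \<beta>j0: "\<beta> j0 = 1" using j0 by (simp add: \<beta>_def)
  have supp_\<beta>: "supp \<beta> = supp \<alpha>" using j0 by (auto simp: supp_def \<beta>_def)
  have D\<beta>: "D (\<beta> j) = 0" if "j \<le> m" for j
  proof (rule ccontr)
    assume "D (\<beta> j) \<noteq> 0"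
    then have "nontrivial (\<lambda>j. D (\<beta> j))"
      using wronskian_relation_D[OF cm yK ysol \<beta>] that by (auto simp: nontrivial_def supp_def)
    then have "card (supp \<alpha>) \<le> card (supp (\<lambda>j. D (\<beta> j)))" by (rule min)
    moreover have "supp (\<lambda>j. D (\<beta> j)) \<subseteq> supp \<beta> - {j0}"
      using \<beta>j0 derivation_one[OF K_subring D_derivation_on] derivation_zero[OF K_subring D_derivation_on]
      by (auto simp: supp_def)
    moreover have "j0 \<in> supp \<beta>" "finite (supp \<beta>)" using j0 \<beta>j0 by (simp_all add: supp_def)
    ultimately show False unfolding supp_\<beta>
      by (metis card_Diff1_less card_mono finite_Diff leD order.strict_trans2 supp_\<beta>)
  qed
  show ?thesis
  proof (cases "m = 0")
    case True
    then have "y 0 = 0" using ysol cm by simp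
    then show ?thesis using True subringD(2)[OF k_subring] by (intro exI[of _ "\<lambda>_. 1"]) auto
  next
    case False
    then have "(\<Sum>j\<le>m. \<beta> j * y j) = 0" using \<beta> by (auto simp: wronskian_relation_def)
    moreover have "\<forall>j\<le>m. \<beta> j \<in> k" using D\<beta> \<beta> constant_in_k by (auto simp: wronskian_relation_def)
    ultimately show ?thesis using j0 \<beta>j0 by (intro exI[of _ \<beta>]) auto
  qed
qed

end

locale exponential_element = differential_pair K k D
  for K k :: "'a::{alg_closed_field, field_char_0} set" and D :: "'a \<Rightarrow> 'a" +
  fixes f a :: 'a
  assumes k_closed: "alg_closed_subfield k"
    and fK: "f \<in> K" and f0: "f \<noteq> 0" and fk: "f \<notin> k"
    and ak: "a \<in> k" and Df: "D f = a * f"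
begin

lemma root_in_k: "p \<in> polys_over k \<Longrightarrow> p \<noteq> 0 \<Longrightarrow> poly p z = 0 \<Longrightarrow> z \<in> k"
  using root_in_subfield[OF k_subfield k_closed] by blast

lemma nth_root_in_k:
  assumes "n > 0" "b \<in> k" "z ^ n = b"
  shows "z \<in> k"
proof (rule root_in_k)
  show "monom 1 n - [:b:] \<in> polys_over k"
    using assms(2) subringD[OF k_subring]
    by (intro subringD(6)[OF subring_kX] polys_over_monom polys_over_const) auto
  show "monom 1 n - [:b:] \<noteq> 0"
  proof
    assume "monom 1 n - [:b:] = 0"
    then have "coeff (monom 1 n - [:b:]) n = 0" by simp
    then show False using assms(1) by (cases n) simp_all
  qed
  show "poly (monom 1 n - [:b:]) z = 0" using assms(3) by (simp add: poly_monom)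
qed

lemma poly_at_f_nonzero: "p \<in> polys_over k \<Longrightarrow> p \<noteq> 0 \<Longrightarrow> poly p f \<noteq> 0"
  using root_in_k fk by blast

lemma ex_algebraic_nth_root_f:
  assumes "M > 0"
  obtains \<theta> where "\<theta> ^ M = f" "algebraic_over K \<theta>"
proof -
  define p where "p = monom (1::'a) M + [:- f:]"
  have "degree p = M" unfolding p_def using assms
    by (subst degree_add_eq_left) (simp_all add: degree_monom_eq)
  then obtain \<theta> where \<theta>: "poly p \<theta> = 0" using alg_closed_imp_poly_has_root[of p] assms by auto
  have "p \<noteq> 0" using \<open>degree p = M\<close> assms by auto
  moreover have "coeff p i \<in> K" for i
    using assms fK subringD(1,2,5)[OF K_subring]
    by (simp add: p_def coeff_monom coeff_pCons split: nat.splits)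
  ultimately have "algebraic_over K \<theta>" using \<theta> unfolding algebraic_over_def by blast
  moreover have "\<theta> ^ M = f" using \<theta> by (simp add: p_def poly_monom)
  ultimately show ?thesis using that by blast
qed

lemma monomial_root_in_laurent:
  assumes n: "n > 0" "n dvd M" and \<theta>: "\<theta> ^ M = f" and b: "b \<in> k" and h: "h ^ n = b * f powi r"
  shows "in_laurent k \<theta> h"
proof -
  have "\<theta> \<noteq> 0" using \<theta> f0 fk subringD(2)[OF k_subring] by (cases M) auto
  define e where "e = r * int (M div n)"
  define c where "c = h / \<theta> powi e"
  have "e * int n = int M * r" using n(2) by (simp add: e_def mult.commute flip: of_nat_mult)
  then have "(\<theta> powi e) ^ n = f powi r" unfolding \<theta>[symmetric]
    by (simp add: power_int_power' power_int_power)
  then have "c ^ n = b" using h \<open>\<theta> \<noteq> 0\<close> f0 by (simp add: c_def power_divide)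
  then have "c \<in> k" by (rule nth_root_in_k[OF n(1) b])
  moreover have "h = c * \<theta> powi e" using \<open>\<theta> \<noteq> 0\<close> by (simp add: c_def)
  ultimately show ?thesis using in_laurent_monomial subringD(1)[OF k_subring] by metis
qed

definition annihilates :: "'a poly poly \<Rightarrow> 'a \<Rightarrow> bool" where
  "annihilates P z \<longleftrightarrow> P \<in> kXY \<and> P \<noteq> 0 \<and> poly2 P f z = 0"

lemma annihilatesD:
  "annihilates P z \<Longrightarrow> P \<in> kXY"
  "annihilates P z \<Longrightarrow> P \<noteq> 0"
  "annihilates P z \<Longrightarrow> poly2 P f z = 0"
  unfolding annihilates_def by auto

lemma annihilates_degree_pos: assumes "annihilates P z" shows "degree P > 0"
proof (rule ccontr)
  assume "\<not> degree P > 0"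
  then obtain c where P: "P = [:c:]" using degree_eq_zeroE by blast
  have "c \<in> polys_over k" "c \<noteq> 0"
    using assms polys_overD[of "[:c:]" _ 0] unfolding annihilates_def P by auto
  then show False using assms poly_at_f_nonzero unfolding annihilates_def P by simp
qed

lemma ex_minimal_annihilator:
  assumes "annihilates P z"
  obtains Q where "annihilates Q z" "\<And>P. annihilates P z \<Longrightarrow> degree Q \<le> degree P"
  using ex_has_least_nat[of "\<lambda>Q. annihilates Q z" P degree] assms by blast

lemma alg_dependent2_imp_annihilates:
  assumes "alg_dependent2 k f g"
  obtains P where "annihilates P g"
proof -
  obtain N c where c: "\<forall>i\<le>N. \<forall>j\<le>N. c i j \<in> k" "\<exists>i\<le>N. \<exists>j\<le>N. c i j \<noteq> 0"
      "(\<Sum>i\<le>N. \<Sum>j\<le>N. c i j * f ^ i * g ^ j) = 0"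
    using assms unfolding alg_dependent2_def by blast
  define P where "P = (\<Sum>j\<le>N. monom (\<Sum>i\<le>N. monom (c i j) i) j)"
  have coeff_P: "coeff (coeff P j) i = (if j \<le> N \<and> i \<le> N then c i j else 0)" for i j
    by (simp add: P_def coeff_sum_monom)
  have "P \<in> kXY" using c(1) subringD(1)[OF k_subring]
    by (intro polys_overI) (auto simp: coeff_P)
  moreover have "P \<noteq> 0" using c(2) coeff_P by (metis coeff_0)
  moreover have "poly2 P f g = (\<Sum>j\<le>N. \<Sum>i\<le>N. c i j * f ^ i * g ^ j)"
    by (simp add: P_def poly2_sum poly_sum poly_monom sum_distrib_right)
  then have "poly2 P f g = 0" using c(3) by (subst (asm) sum.swap) simp
  ultimately show ?thesis using that unfolding annihilates_def by blast
qed

end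


section \<open>The derivation \<open>f d/df\<close> on \<open>k(f, g)\<close>\<close>

locale algebraic_element = exponential_element +
  fixes g :: 'a and Q :: "'a poly poly"
  assumes gK: "g \<in> K" and Q_annihilates: "annihilates Q g"
    and Q_minimal: "\<And>P. annihilates P g \<Longrightarrow> degree Q \<le> degree P"
begin

lemma Q_in_kXY: "Q \<in> kXY" and Q_nonzero: "Q \<noteq> 0" and poly2_Q: "poly2 Q f g = 0"
  using Q_annihilates unfolding annihilates_def by auto

lemma below_min_degree_eq_0: "P \<in> kXY \<Longrightarrow> poly2 P f g = 0 \<Longrightarrow> degree P < degree Q \<Longrightarrow> P = 0"
  using Q_minimal unfolding annihilates_def by force

lemma separable_at_g: "poly2 (pderiv Q) f g \<noteq> 0"
proof
  assume h: "poly2 (pderiv Q) f g = 0"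
  have "degree Q > 0" using annihilates_degree_pos[OF Q_annihilates] .
  then have "pderiv Q \<noteq> 0" by (simp add: pderiv_eq_0_iff)
  moreover have "degree (pderiv Q) < degree Q" using \<open>degree Q > 0\<close> by (simp add: degree_pderiv)
  moreover have "pderiv Q \<in> kXY" by (rule polys_over_pderiv[OF subring_kX Q_in_kXY])
  ultimately show False using below_min_degree_eq_0 h by blast
qed

text \<open>Applying \<open>\<delta>\<close> (with \<open>\<delta> f = f\<close>) to \<open>Q(f, g) = 0\<close> forces this value of \<open>\<delta> g\<close>, and by the
  chain rule \<open>formal_delta P\<close> must be \<open>\<delta> (P(f, g))\<close>.\<close>

definition delta_g :: 'a where "delta_g = - (f * poly2 (map_poly pderiv Q) f g) / poly2 (pderiv Q) f g"

definition formal_delta :: "'a poly poly \<Rightarrow> 'a" where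
  "formal_delta P = f * poly2 (map_poly pderiv P) f g + poly2 (pderiv P) f g * delta_g"

lemma formal_delta_add: "formal_delta (P + R) = formal_delta P + formal_delta R"
  by (simp add: formal_delta_def map_pderiv_add pderiv_add algebra_simps)

lemma formal_delta_diff: "formal_delta (P - R) = formal_delta P - formal_delta R"
  by (simp add: formal_delta_def map_pderiv_diff pderiv_diff algebra_simps)

lemma formal_delta_mult:
  "formal_delta (P * R) = formal_delta P * poly2 R f g + poly2 P f g * formal_delta R"
  by (simp add: formal_delta_def map_pderiv_mult pderiv_mult algebra_simps)

lemma formal_delta_Q: "formal_delta Q = 0"
  using separable_at_g by (simp add: formal_delta_def delta_g_def field_simps)

lemma formal_delta_const: "formal_delta [:c:] = f * poly (pderiv c) f"
  by (simp add: formal_delta_def map_poly_pCons pderiv_pCons)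

lemma formal_delta_eq_0_if_root:
  assumes T: "T \<in> kXY" and T_root: "poly2 T f g = 0"
  shows "formal_delta T = 0"
proof -
  obtain S Rm where div: "pseudo_divmod T Q = (S, Rm)" by fastforce
  define c where "c = lead_coeff Q ^ (Suc (degree T) - degree Q)"
  have S: "S \<in> kXY" and Rm: "Rm \<in> kXY"
    using pseudo_divmod_polys_over[OF subring_kX T Q_in_kXY] div by auto
  have TQ: "smult c T = Q * S + Rm" "Rm = 0 \<or> degree Rm < degree Q"
    using pseudo_divmod[OF Q_nonzero div] by (simp_all add: c_def)
  have "poly2 Rm f g = 0" using arg_cong[OF TQ(1), of "\<lambda>P. poly2 P f g"] T_root poly2_Q by simp
  then have "Rm = 0" using below_min_degree_eq_0 Rm TQ(2) by blast
  then have "formal_delta (smult c T) = 0"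
    using TQ(1) by (simp add: formal_delta_mult formal_delta_Q poly2_Q)
  moreover have "formal_delta (smult c T) = poly c f * formal_delta T"
    using formal_delta_mult[of "[:c:]" T] T_root by (simp add: formal_delta_const)
  moreover have "poly c f \<noteq> 0"
    using poly_at_f_nonzero[of "lead_coeff Q"] polys_overD[OF Q_in_kXY] Q_nonzero
    by (simp add: c_def poly_power)
  ultimately show ?thesis by simp
qed


definition E :: "'a set" where
  "E = {z. \<exists>P R. P \<in> kXY \<and> R \<in> kXY \<and> poly2 R f g \<noteq> 0 \<and> z = poly2 P f g / poly2 R f g}"

lemma E_cases:
  assumes "z \<in> E"
  obtains P R where "P \<in> kXY" "R \<in> kXY" "poly2 R f g \<noteq> 0" "z = poly2 P f g / poly2 R f g"
  using assms unfolding E_def by blast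

lemma E_intro: "P \<in> kXY \<Longrightarrow> R \<in> kXY \<Longrightarrow> poly2 R f g \<noteq> 0 \<Longrightarrow> poly2 P f g / poly2 R f g \<in> E"
  unfolding E_def by blast

definition delta_frac :: "'a poly poly \<Rightarrow> 'a poly poly \<Rightarrow> 'a" where
  "delta_frac P R = (formal_delta P * poly2 R f g - poly2 P f g * formal_delta R) / (poly2 R f g)\<^sup>2"

definition delta :: "'a \<Rightarrow> 'a" where
  "delta z = (THE v. \<exists>P R. P \<in> kXY \<and> R \<in> kXY \<and> poly2 R f g \<noteq> 0 \<and> z = poly2 P f g / poly2 R f g
                       \<and> v = delta_frac P R)"

lemma delta_frac_well_defined:
  assumes "P1 \<in> kXY" "R1 \<in> kXY" "poly2 R1 f g \<noteq> 0" "P2 \<in> kXY" "R2 \<in> kXY" "poly2 R2 f g \<noteq> 0"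
    and eq: "poly2 P1 f g / poly2 R1 f g = poly2 P2 f g / poly2 R2 f g"
  shows "delta_frac P1 R1 = delta_frac P2 R2"
proof -
  define T where "T = P1 * R2 - P2 * R1"
  have T: "T \<in> kXY" unfolding T_def using assms by (intro subringD[OF subring_kXY]) auto
  have cross: "poly2 P1 f g * poly2 R2 f g = poly2 P2 f g * poly2 R1 f g"
    using eq assms by (simp add: field_simps)
  then have "formal_delta T = 0" using formal_delta_eq_0_if_root[OF T] by (simp add: T_def)
  then have "formal_delta P1 * poly2 R2 f g + poly2 P1 f g * formal_delta R2
      = formal_delta P2 * poly2 R1 f g + poly2 P2 f g * formal_delta R1"
    by (simp add: T_def formal_delta_diff formal_delta_mult)
  then have "(formal_delta P1 * poly2 R1 f g - poly2 P1 f g * formal_delta R1) * (poly2 R2 f g)\<^sup>2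
      = (formal_delta P2 * poly2 R2 f g - poly2 P2 f g * formal_delta R2) * (poly2 R1 f g)\<^sup>2"
    using cross by algebra
  then show ?thesis using assms unfolding delta_frac_def by (simp add: field_simps)
qed

lemma delta_frac_eq:
  assumes "P \<in> kXY" "R \<in> kXY" "poly2 R f g \<noteq> 0"
  shows "delta (poly2 P f g / poly2 R f g) = delta_frac P R"
  unfolding delta_def
proof (rule the_equality)
  show "\<exists>P' R'. P' \<in> kXY \<and> R' \<in> kXY \<and> poly2 R' f g \<noteq> 0 \<and> poly2 P f g / poly2 R f g = poly2 P' f g / poly2 R' f g
      \<and> delta_frac P R = delta_frac P' R'"
    using assms by blast
  show "v = delta_frac P R"
    if "\<exists>P' R'. P' \<in> kXY \<and> R' \<in> kXY \<and> poly2 R' f g \<noteq> 0 \<and> poly2 P f g / poly2 R f g = poly2 P' f g / poly2 R' f g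
      \<and> v = delta_frac P' R'" for v
    using that delta_frac_well_defined[OF assms] by metis
qed

lemma one_in_kXY: "1 \<in> kXY" and zero_in_kXY: "0 \<in> kXY"
  using subringD[OF subring_kXY] by auto

lemma formal_delta_1: "formal_delta 1 = 0"
proof -
  have "map_poly pderiv (1::'a poly poly) = 0" by (rule poly_eqI) (simp add: coeff_map_poly coeff_1)
  then show ?thesis by (simp add: formal_delta_def)
qed

lemma delta_poly2: "P \<in> kXY \<Longrightarrow> delta (poly2 P f g) = formal_delta P"
  using delta_frac_eq[of P 1] one_in_kXY by (simp add: delta_frac_def formal_delta_1)

lemma poly2_in_E: "P \<in> kXY \<Longrightarrow> poly2 P f g \<in> E"
  using E_intro[of P 1] one_in_kXY by simp

lemma E_add_mult:
  assumes x: "x \<in> E" and y: "y \<in> E"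
  shows "x + y \<in> E \<and> delta (x + y) = delta x + delta y"
    and "x * y \<in> E \<and> delta (x * y) = x * delta y + delta x * y"
proof -
  obtain P1 R1 where r1: "P1 \<in> kXY" "R1 \<in> kXY" "poly2 R1 f g \<noteq> 0" "x = poly2 P1 f g / poly2 R1 f g"
    using x by (rule E_cases)
  obtain P2 R2 where r2: "P2 \<in> kXY" "R2 \<in> kXY" "poly2 R2 f g \<noteq> 0" "y = poly2 P2 f g / poly2 R2 f g"
    using y by (rule E_cases)
  note kXY = subringD[OF subring_kXY]
  have R: "R1 * R2 \<in> kXY" "poly2 (R1 * R2) f g \<noteq> 0" using r1 r2 by (simp_all add: kXY)
  have delta_x: "delta x = delta_frac P1 R1" using delta_frac_eq[OF r1(1-3)] r1(4) by simp
  have delta_y: "delta y = delta_frac P2 R2" using delta_frac_eq[OF r2(1-3)] r2(4) by simp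
  have sum: "x + y = poly2 (P1 * R2 + P2 * R1) f g / poly2 (R1 * R2) f g"
    unfolding r1(4) r2(4) poly2_add poly2_mult using r1(3) r2(3) by (rule add_frac_eq)
  have "P1 * R2 + P2 * R1 \<in> kXY" using r1 r2 by (simp add: kXY)
  note sum_E = E_intro[OF this R] and delta_sum = delta_frac_eq[OF this R]
  have "delta (x + y) = delta_frac (P1 * R2 + P2 * R1) (R1 * R2)" unfolding sum by (rule delta_sum)
  also have "\<dots> = delta x + delta y"
    unfolding delta_x delta_y delta_frac_def formal_delta_add formal_delta_mult poly2_add poly2_mult
    using r1(3) r2(3) by (simp add: field_simps power2_eq_square)
  finally show "x + y \<in> E \<and> delta (x + y) = delta x + delta y" using sum sum_E by simp
  have prod: "x * y = poly2 (P1 * P2) f g / poly2 (R1 * R2) f g"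
    unfolding r1(4) r2(4) poly2_mult by (rule times_divide_times_eq)
  have "P1 * P2 \<in> kXY" using r1 r2 by (simp add: kXY)
  note prod_E = E_intro[OF this R] and delta_prod = delta_frac_eq[OF this R]
  have "delta (x * y) = delta_frac (P1 * P2) (R1 * R2)" unfolding prod by (rule delta_prod)
  also have "\<dots> = x * delta y + delta x * y"
    unfolding delta_x delta_y unfolding delta_frac_def formal_delta_mult poly2_mult r1(4) r2(4)
    using r1(3) r2(3) by (simp add: field_simps power2_eq_square)
  finally show "x * y \<in> E \<and> delta (x * y) = x * delta y + delta x * y" using prod prod_E by simp
qed

lemma E_subfield: "is_subfield E"
  unfolding is_subfield_def
proof (intro conjI ballI impI)
  show "0 \<in> E" "1 \<in> E" using poly2_in_E[OF zero_in_kXY] poly2_in_E[OF one_in_kXY] by simp_all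
  show "x + y \<in> E" "x * y \<in> E" if "x \<in> E" "y \<in> E" for x y using E_add_mult[OF that] by blast+
  fix x assume "x \<in> E"
  then obtain P R where r: "P \<in> kXY" "R \<in> kXY" "poly2 R f g \<noteq> 0" "x = poly2 P f g / poly2 R f g"
    by (rule E_cases)
  show "- x \<in> E" using E_intro[of "- P" R] r subringD(5)[OF subring_kXY] by simp
  assume "x \<noteq> 0"
  then show "inverse x \<in> E" using E_intro[of R P] r by simp
qed

lemma E_subring: "is_subring E"
  using subfield_imp_subring[OF E_subfield] .

lemma E_add: "x \<in> E \<Longrightarrow> y \<in> E \<Longrightarrow> x + y \<in> E"
  and E_mult: "x \<in> E \<Longrightarrow> y \<in> E \<Longrightarrow> x * y \<in> E"
  and E_uminus: "x \<in> E \<Longrightarrow> - x \<in> E"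
  and E_diff: "x \<in> E \<Longrightarrow> y \<in> E \<Longrightarrow> x - y \<in> E"
  and E_divide: "x \<in> E \<Longrightarrow> y \<in> E \<Longrightarrow> x / y \<in> E"
  using subringD[OF E_subring] subfield_divide[OF E_subfield] by auto

lemma delta_derivation_on: "derivation_on E delta"
  unfolding derivation_on_def using E_add_mult by blast

lemma k_in_E: "c \<in> k \<Longrightarrow> c \<in> E"
  using poly2_in_E[of "[:[:c:]:]"] subringD(1)[OF k_subring] subringD(1)[OF subring_kX]
  by (simp add: polys_over_const)

lemma f_in_E: "f \<in> E"
  using poly2_in_E[of "[:[:0, 1:]:]"] X_in_kX subringD(1)[OF subring_kX]
  by (simp add: polys_over_const)

lemma g_in_E: "g \<in> E"
  using poly2_in_E[of "[:0, 1:]"] subringD(1,2)[OF subring_kX] zero_in_kXY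
  by (simp add: polys_over_pCons polys_over_const)

lemma map_pderiv_in_kXY: "P \<in> kXY \<Longrightarrow> map_poly pderiv P \<in> kXY"
  by (intro polys_over_map_poly[where S="polys_over k"] subringD(1)[OF subring_kX])
    (auto intro: polys_over_pderiv[OF k_subring])

lemma formal_delta_in_E: "P \<in> kXY \<Longrightarrow> formal_delta P \<in> E"
  unfolding formal_delta_def delta_g_def
  by (intro E_add E_mult E_divide E_uminus f_in_E poly2_in_E map_pderiv_in_kXY Q_in_kXY
      polys_over_pderiv[OF subring_kX])

lemma delta_in_E: assumes "x \<in> E" shows "delta x \<in> E"
proof -
  obtain P R where r: "P \<in> kXY" "R \<in> kXY" "poly2 R f g \<noteq> 0" "x = poly2 P f g / poly2 R f g"
    using assms by (rule E_cases)
  show ?thesis unfolding r(4) delta_frac_eq[OF r(1-3)] delta_frac_def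
    by (intro E_divide E_diff E_mult formal_delta_in_E poly2_in_E r subring_power[OF E_subring])
qed

lemma E_subset_K: "E \<subseteq> K"
proof
  fix z assume "z \<in> E"
  then obtain P R where r: "P \<in> kXY" "R \<in> kXY" "poly2 R f g \<noteq> 0" "z = poly2 P f g / poly2 R f g"
    by (rule E_cases)
  show "z \<in> K" unfolding r(4)
    by (intro subfield_divide[OF K_subfield] poly2_in_subring[OF K_subring k_subset_K] r fK gK)
qed

lemma delta_k: "c \<in> k \<Longrightarrow> delta c = 0"
  using delta_poly2[of "[:[:c:]:]"] subringD(1)[OF k_subring] subringD(1)[OF subring_kX]
  by (simp add: polys_over_const formal_delta_const)

lemma delta_f: "delta f = f"
  using delta_poly2[of "[:[:0,1:]:]"] X_in_kX subringD(1)[OF subring_kX]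
  by (simp add: polys_over_const formal_delta_const pderiv_pCons)


section \<open>\<open>\<delta>\<close> commutes with \<open>D\<close>\<close>

lemma D_zero: "D 0 = 0"
  using derivation_zero[OF K_subring D_derivation_on] .

lemma delta_zero: "delta 0 = 0"
  using derivation_zero[OF E_subring delta_derivation_on] .

lemma map_D_in_kXY: "P \<in> kXY \<Longrightarrow> map_poly (map_poly D) P \<in> kXY"
  by (intro polys_over_map_poly[where S="polys_over k"] subringD(1)[OF subring_kX])
    (auto intro!: polys_over_map_poly D_in_k subringD(1)[OF k_subring] simp: D_zero)

lemma D_poly2:
  "P \<in> kXY \<Longrightarrow> D (poly2 P f g) =
    poly2 (map_poly (map_poly D) P) f g + poly2 (map_poly pderiv P) f g * (a * f) + poly2 (pderiv P) f g * D g"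
  using derivation_poly2[OF K_subring D_derivation_on k_subset_K _ fK gK] Df by simp

lemma D_g_in_E: "D g \<in> E"
proof -
  let ?A = "poly2 (map_poly (map_poly D) Q) f g + poly2 (map_poly pderiv Q) f g * (a * f)"
  have "0 = D (poly2 Q f g)" using poly2_Q D_zero by simp
  also have "\<dots> = ?A + poly2 (pderiv Q) f g * D g" by (rule D_poly2[OF Q_in_kXY])
  finally have "D g = - ?A / poly2 (pderiv Q) f g"
    using separable_at_g by (simp add: field_simps eq_neg_iff_add_eq_0)
  also have "\<dots> \<in> E"
    by (intro E_divide E_uminus E_add E_mult poly2_in_E map_D_in_kXY map_pderiv_in_kXY Q_in_kXY
        k_in_E ak f_in_E polys_over_pderiv[OF subring_kX])
  finally show ?thesis .
qed

lemma D_in_E: assumes z: "z \<in> E" shows "D z \<in> E"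
proof -
  obtain P R where r: "P \<in> kXY" "R \<in> kXY" "poly2 R f g \<noteq> 0" "z = poly2 P f g / poly2 R f g"
    using z by (rule E_cases)
  have D_poly2_in_E: "D (poly2 P f g) \<in> E" if "P \<in> kXY" for P
    unfolding D_poly2[OF that]
    by (intro E_add E_mult poly2_in_E map_D_in_kXY map_pderiv_in_kXY that k_in_E ak f_in_E D_g_in_E
        polys_over_pderiv[OF subring_kX])
  have "poly2 P f g \<in> K" "poly2 R f g \<in> K" using r poly2_in_E E_subset_K by auto
  from derivation_divide[OF K_subfield D_derivation_on this r(3)] show ?thesis
    unfolding r(4) by (simp only:)
      (intro E_divide E_diff E_mult D_poly2_in_E poly2_in_E r subring_power[OF E_subring])
qed

definition commutator :: "'a \<Rightarrow> 'a" where
  "commutator z = D (delta z) - delta (D z)"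

lemma commutator_derivation_on: "derivation_on E commutator"
  unfolding commutator_def
  using derivation_on_commutator[OF E_subring derivation_on_subset[OF D_derivation_on E_subset_K]
      delta_derivation_on D_in_E delta_in_E] .

lemma commutator_zero: "commutator 0 = 0"
  using derivation_zero[OF E_subring commutator_derivation_on] .

lemma commutator_k: "c \<in> k \<Longrightarrow> commutator c = 0"
  unfolding commutator_def using delta_k D_in_k D_zero by simp

lemma commutator_f: "commutator f = 0"
proof -
  have "delta (a * f) = a * delta f + delta a * f"
    by (rule derivation_onD(2)[OF delta_derivation_on k_in_E[OF ak] f_in_E])
  then show ?thesis unfolding commutator_def using delta_f Df delta_k[OF ak] by simp
qed

lemma commutator_poly2:
  assumes P: "P \<in> kXY"
  shows "commutator (poly2 P f g) = poly2 (pderiv P) f g * commutator g"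
proof -
  have "commutator (poly2 P f g) = poly2 (map_poly (map_poly commutator) P) f g
      + poly2 (map_poly pderiv P) f g * commutator f + poly2 (pderiv P) f g * commutator g"
    by (rule derivation_poly2[OF E_subring commutator_derivation_on _ P f_in_E g_in_E]) (use k_in_E in blast)
  moreover have "map_poly (map_poly commutator) P = 0"
    by (rule map_poly2_eq_0[where T = k and d = commutator, OF commutator_k commutator_zero P])
  ultimately show ?thesis using commutator_f by simp
qed

lemma commutator_g: "commutator g = 0"
  using commutator_poly2[OF Q_in_kXY] poly2_Q commutator_zero separable_at_g by simp

lemma commutator_E: assumes z: "z \<in> E" shows "commutator z = 0"
proof -
  obtain P R where r: "P \<in> kXY" "R \<in> kXY" "poly2 R f g \<noteq> 0" "z = poly2 P f g / poly2 R f g"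
    using z by (rule E_cases)
  show ?thesis
    using derivation_divide[OF E_subfield commutator_derivation_on poly2_in_E[OF r(1)] poly2_in_E[OF r(2)] r(3)]
      commutator_poly2[OF r(1)] commutator_poly2[OF r(2)] commutator_g r(4) by simp
qed

lemma D_delta_commute: "z \<in> E \<Longrightarrow> D (delta z) = delta (D z)"
  using commutator_E unfolding commutator_def by fastforce


section \<open>\<open>k(f, g)\<close> is algebraic over \<open>k(f)\<close>\<close>

definition kf :: "'a set" where
  "kf = {x. \<exists>p q. p \<in> polys_over k \<and> q \<in> polys_over k \<and> q \<noteq> 0 \<and> x = poly p f / poly q f}"

lemma kf_subfield: "is_subfield kf"
proof -
  note kk = subringD[OF subring_kX]
  have one: "(1::'a poly) \<in> polys_over k" using kk by simp
  have pq: "poly q f \<noteq> 0" if "q \<in> polys_over k" "q \<noteq> 0" for q using poly_at_f_nonzero that by blast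
  show ?thesis unfolding is_subfield_def
  proof (intro conjI ballI impI)
    show "0 \<in> kf" unfolding kf_def using kk one by (intro CollectI exI[of _ 0] exI[of _ 1]) auto
    show "1 \<in> kf" unfolding kf_def using kk one by (intro CollectI exI[of _ 1] exI[of _ 1]) auto
    fix x y assume x: "x \<in> kf" and y: "y \<in> kf"
    obtain p1 q1 p2 q2 where r: "p1 \<in> polys_over k" "q1 \<in> polys_over k" "q1 \<noteq> 0" "x = poly p1 f / poly q1 f"
      "p2 \<in> polys_over k" "q2 \<in> polys_over k" "q2 \<noteq> 0" "y = poly p2 f / poly q2 f"
      using x y unfolding kf_def by blast
    have n1: "poly q1 f \<noteq> 0" "poly q2 f \<noteq> 0" using pq r by auto
    have "x + y = poly (p1 * q2 + p2 * q1) f / poly (q1 * q2) f" unfolding r(4) r(8) using n1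
      by (simp add: field_simps)
    then show "x + y \<in> kf" unfolding kf_def using r kk
      by (intro CollectI exI[of _ "p1 * q2 + p2 * q1"] exI[of _ "q1 * q2"]) auto
    have "x * y = poly (p1 * p2) f / poly (q1 * q2) f" unfolding r(4) r(8) using n1
      by (simp add: field_simps)
    then show "x * y \<in> kf" unfolding kf_def using r kk
      by (intro CollectI exI[of _ "p1 * p2"] exI[of _ "q1 * q2"]) auto
  next
    fix x assume x: "x \<in> kf"
    obtain p1 q1 where r: "p1 \<in> polys_over k" "q1 \<in> polys_over k" "q1 \<noteq> 0" "x = poly p1 f / poly q1 f"
      using x unfolding kf_def by blast
    show "- x \<in> kf" unfolding kf_def using r kk
      by (intro CollectI exI[of _ "- p1"] exI[of _ "q1"]) auto
    assume "x \<noteq> 0"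
    then have "p1 \<noteq> 0" using r by auto
    then show "inverse x \<in> kf" unfolding kf_def using r
      by (intro CollectI exI[of _ q1] exI[of _ p1]) (auto simp: field_simps)
  qed
qed

lemma kf_subring: "is_subring kf" using subfield_imp_subring[OF kf_subfield] .

lemma poly_f_in_kf: "p \<in> polys_over k \<Longrightarrow> poly p f \<in> kf"
  unfolding kf_def using subringD(2)[OF subring_kX] by (intro CollectI exI[of _ p] exI[of _ 1]) auto

abbreviation dQ where "dQ \<equiv> degree Q"

lemma dQ_pos: "dQ > 0" using annihilates_degree_pos[OF Q_annihilates] .

text \<open>\<open>V\<close> turns out to be a field containing \<open>E\<close>, so \<open>E\<close> has finite degree over \<open>k(f)\<close>.\<close>

definition V :: "'a set" where
  "V = {x. \<exists>c. (\<forall>j<dQ. c j \<in> kf) \<and> x = (\<Sum>j<dQ. c j * g ^ j)}"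

lemma V_add: assumes "x \<in> V" "y \<in> V" shows "x + y \<in> V"
proof -
  obtain c1 c2 where "\<forall>j<dQ. c1 j \<in> kf" "x = (\<Sum>j<dQ. c1 j * g ^ j)"
      "\<forall>j<dQ. c2 j \<in> kf" "y = (\<Sum>j<dQ. c2 j * g ^ j)"
    using assms unfolding V_def by blast
  then show ?thesis unfolding V_def
    by (intro CollectI exI[of _ "\<lambda>j. c1 j + c2 j"]) (auto simp: sum.distrib algebra_simps subringD[OF kf_subring])
qed

lemma V_kf_mult: assumes "u \<in> kf" "x \<in> V" shows "u * x \<in> V"
proof -
  obtain c1 where "\<forall>j<dQ. c1 j \<in> kf" "x = (\<Sum>j<dQ. c1 j * g ^ j)"
    using assms unfolding V_def by blast
  then show ?thesis unfolding V_def using assms(1)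
    by (intro CollectI exI[of _ "\<lambda>j. u * c1 j"]) (auto simp: sum_distrib_left algebra_simps subringD[OF kf_subring])
qed

lemma V_0: "0 \<in> V"
  unfolding V_def using subringD(1)[OF kf_subring] by (intro CollectI exI[of _ "\<lambda>j. 0"]) auto

lemma V_sum: "(\<And>i. i \<in> A \<Longrightarrow> x i \<in> V) \<Longrightarrow> sum x A \<in> V"
  by (induction A rule: infinite_finite_induct) (auto intro: V_add V_0)

lemma V_g_power: assumes "j < dQ" shows "g ^ j \<in> V"
proof -
  have "(\<Sum>i<dQ. (if i = j then 1 else 0) * g ^ i) = (\<Sum>i<dQ. if i = j then g ^ i else 0)"
    by (rule sum.cong) auto
  also have "\<dots> = g ^ j" using assms by simp
  finally show ?thesis unfolding V_def using subringD(1,2)[OF kf_subring]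
    by (intro CollectI exI[of _ "\<lambda>i. if i = j then 1 else 0"]) auto
qed

lemma V_kf: "u \<in> kf \<Longrightarrow> u \<in> V"
  using V_kf_mult[OF _ V_g_power[OF dQ_pos]] by simp

lemma V_g_power_degree: "g ^ dQ \<in> V"
proof -
  have lc: "poly (lead_coeff Q) f \<noteq> 0" using poly_at_f_nonzero polys_overD[OF Q_in_kXY] Q_nonzero
    by simp
  have "0 = (\<Sum>j\<le>dQ. poly (coeff Q j) f * g ^ j)" using poly2_Q by (simp add: poly2_altdef)
  also have "\<dots> = (\<Sum>j<dQ. poly (coeff Q j) f * g ^ j) + poly (lead_coeff Q) f * g ^ dQ"
    by (simp add: lessThan_Suc_atMost[symmetric])
  finally have "g ^ dQ = (\<Sum>j<dQ. (- poly (coeff Q j) f / poly (lead_coeff Q) f) * g ^ j)"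
    using lc by (simp add: field_simps sum_divide_distrib[symmetric] eq_neg_iff_add_eq_0 add.commute sum_negf)
  also have "\<dots> \<in> V"
  proof (intro V_sum V_kf_mult)
    fix j assume j: "j \<in> {..<dQ}"
    show "g ^ j \<in> V" using j by (simp add: V_g_power)
    show "- poly (coeff Q j) f / poly (lead_coeff Q) f \<in> kf"
      by (intro subfield_divide[OF kf_subfield] subringD(5)[OF kf_subring] poly_f_in_kf polys_overD[OF Q_in_kXY])
  qed
  finally show ?thesis .
qed

lemma V_g_mult: assumes "x \<in> V" shows "g * x \<in> V"
proof -
  obtain c1 where c: "\<forall>j<dQ. c1 j \<in> kf" "x = (\<Sum>j<dQ. c1 j * g ^ j)"
    using assms unfolding V_def by blast
  have "g * x = (\<Sum>j<dQ. c1 j * g ^ Suc j)" unfolding c(2)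
    by (simp add: sum_distrib_left algebra_simps)
  also have "\<dots> \<in> V"
  proof (intro V_sum V_kf_mult)
    fix j assume j: "j \<in> {..<dQ}"
    then show "c1 j \<in> kf" using c by auto
    show "g ^ Suc j \<in> V" using j V_g_power[of "Suc j"] V_g_power_degree by (cases "Suc j = dQ") auto
  qed
  finally show ?thesis .
qed

lemma V_g_power_mult: "x \<in> V \<Longrightarrow> g ^ n * x \<in> V"
  by (induction n) (auto simp: mult.assoc intro: V_g_mult)

lemma V_mult: assumes "x \<in> V" "y \<in> V" shows "x * y \<in> V"
proof -
  obtain c1 where c: "\<forall>j<dQ. c1 j \<in> kf" "x = (\<Sum>j<dQ. c1 j * g ^ j)"
    using assms unfolding V_def by blast
  have "x * y = (\<Sum>j<dQ. c1 j * (g ^ j * y))" unfolding c(2)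
    by (simp add: sum_distrib_right mult.assoc)
  also have "\<dots> \<in> V" using c(1) assms(2) by (intro V_sum V_kf_mult V_g_power_mult) auto
  finally show ?thesis .
qed

lemma V_subring: "is_subring V"
  unfolding is_subring_def
  using V_add V_mult V_0 V_kf subringD(2)[OF kf_subring]
    V_kf_mult[OF subringD(5)[OF kf_subring subringD(2)[OF kf_subring]]]
  by auto

lemma V_powers_dependent:
  assumes z: "z \<in> V"
  shows "\<exists>c. (\<forall>i\<le>dQ. c i \<in> kf) \<and> (\<exists>i\<le>dQ. c i \<noteq> 0) \<and> (\<Sum>i\<le>dQ. c i * z ^ i) = 0"
proof -
  have "\<forall>i. \<exists>c. (\<forall>j<dQ. c j \<in> kf) \<and> z ^ i = (\<Sum>j<dQ. c j * g ^ j)"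
    using subring_power[OF V_subring z] unfolding V_def by blast
  then obtain M where M: "\<And>i. (\<forall>j<dQ. M i j \<in> kf) \<and> z ^ i = (\<Sum>j<dQ. M i j * g ^ j)"
    by metis
  obtain c where c: "\<forall>i\<in>{..dQ}. c i \<in> kf" "\<exists>i\<in>{..dQ}. c i \<noteq> 0"
      "\<forall>j\<in>{..<dQ}. (\<Sum>i\<in>{..dQ}. c i * M i j) = 0"
    using homogeneous_system_nontrivial_solution[OF kf_subfield, of "{..<dQ}" "{..dQ}" M] M by auto
  have "(\<Sum>i\<le>dQ. c i * z ^ i) = (\<Sum>i\<le>dQ. \<Sum>j<dQ. c i * M i j * g ^ j)"
    using M by (simp add: sum_distrib_left mult.assoc)
  also have "\<dots> = (\<Sum>j<dQ. (\<Sum>i\<le>dQ. c i * M i j) * g ^ j)"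
    by (subst sum.swap) (simp add: sum_distrib_right)
  also have "\<dots> = 0" using c(3) by simp
  finally show ?thesis using c by blast
qed

lemma V_inverse_if_root:
  assumes r: "r \<in> V" "r \<noteq> 0"
  shows "p \<in> polys_over kf \<Longrightarrow> p \<noteq> 0 \<Longrightarrow> poly p r = 0 \<Longrightarrow> inverse r \<in> V"
proof (induction "degree p" arbitrary: p rule: less_induct)
  case less
  define p2 where "p2 = synthetic_div p 0"
  have F0: "0 \<in> kf" using subringD(1)[OF kf_subring] .
  have p2F: "p2 \<in> polys_over kf" unfolding p2_def
    by (rule polys_over_synthetic_div[OF kf_subring F0 less.prems(1)])
  have pp: "p = [:0, 1:] * p2 + [:poly p 0:]" using synthetic_div_correct'[of 0 p]
    by (simp add: p2_def)
  have p0F: "poly p 0 \<in> kf" using polys_overD[OF less.prems(1), of 0] by (simp add: poly_0_coeff_0)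
  have "poly p r = r * poly p2 r + poly p 0" by (subst pp) simp
  then have ev: "0 = r * poly p2 r + poly p 0" using less.prems(3) by simp
  show ?case
  proof (cases "poly p 0 = 0")
    case False
    have "inverse r = - inverse (poly p 0) * poly p2 r"
      using ev r(2) False by (simp add: field_simps eq_neg_iff_add_eq_0)
    also have "\<dots> \<in> V"
      by (intro V_mult V_kf subringD(5)[OF kf_subring] subfield_inverse[OF kf_subfield] p0F
          poly_in_subring[OF V_subring _ p2F r(1)])
         (auto intro: V_kf)
    finally show ?thesis .
  next
    case True
    then have pp2: "p = [:0, 1:] * p2" using pp by simp
    then have "p2 \<noteq> 0" using less.prems(2) by auto
    moreover have "degree p2 < degree p" using pp2 \<open>p2 \<noteq> 0\<close> by (simp add: degree_mult_eq)
    moreover have "poly p2 r = 0" using less.prems(3) pp2 r(2) by simp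
    ultimately show ?thesis using less.hyps p2F by blast
  qed
qed

lemma V_inverse: assumes r: "r \<in> V" shows "inverse r \<in> V"
proof (cases "r = 0")
  case True then show ?thesis using V_0 by simp
next
  case False
  obtain c where c: "\<forall>i\<le>dQ. c i \<in> kf" "\<exists>i\<le>dQ. c i \<noteq> 0" "(\<Sum>i\<le>dQ. c i * r ^ i) = 0"
    using V_powers_dependent[OF r] by blast
  define p where "p = (\<Sum>i\<le>dQ. monom (c i) i)"
  have cp: "coeff p n = (if n \<le> dQ then c n else 0)" for n unfolding p_def by (rule coeff_sum_monom)
  have "p \<in> polys_over kf" using c(1) subringD(1)[OF kf_subring]
    by (intro polys_overI[of p]) (simp add: cp)
  moreover have "p \<noteq> 0" using c(2) cp by (metis coeff_0)
  moreover have "poly p r = 0" using c(3) by (simp add: p_def poly_sum poly_monom)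
  ultimately show ?thesis by (rule V_inverse_if_root[OF r False])
qed

lemma E_subset_V: "E \<subseteq> V"
proof
  fix z assume "z \<in> E"
  then obtain P R where r: "P \<in> kXY" "R \<in> kXY" "poly2 R f g \<noteq> 0" "z = poly2 P f g / poly2 R f g"
    by (rule E_cases)
  have kV: "k \<subseteq> V"
  proof
    fix c assume "c \<in> k"
    then have "poly [:c:] f \<in> kf" using subringD(1)[OF k_subring]
      by (intro poly_f_in_kf polys_over_const)
    then show "c \<in> V" using V_kf by simp
  qed
  have fV: "f \<in> V" using V_kf[OF poly_f_in_kf[OF X_in_kX]] by simp
  have gV: "g \<in> V" using V_g_power[of 1] V_g_power_degree dQ_pos by (cases "dQ = 1") auto
  have ev: "poly2 P f g \<in> V" if "P \<in> kXY" for P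
    by (rule poly2_in_subring[OF V_subring kV that fV gV])
  have "z = poly2 P f g * inverse (poly2 R f g)" using r(4) by (simp add: divide_inverse)
  then show "z \<in> V" using ev r V_mult V_inverse by simp
qed

lemma annihilates_if_kf_relation:
  assumes c: "\<forall>i\<le>n. c i \<in> kf" "\<exists>i\<le>n. c i \<noteq> 0" and rel: "(\<Sum>i\<le>n. c i * z ^ i) = 0"
  obtains P where "annihilates P z"
proof -
  have "\<forall>i. \<exists>pq. i \<le> n \<longrightarrow> fst pq \<in> polys_over k \<and> snd pq \<in> polys_over k \<and> snd pq \<noteq> 0
      \<and> c i = poly (fst pq) f / poly (snd pq) f"
    using c(1) unfolding kf_def by fastforce
  then obtain pq where pq': "\<And>i. i \<le> n \<Longrightarrow> fst (pq i) \<in> polys_over k \<and> snd (pq i) \<in> polys_over k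
      \<and> snd (pq i) \<noteq> 0 \<and> c i = poly (fst (pq i)) f / poly (snd (pq i)) f"
    by metis
  define p where "p i = fst (pq i)" for i
  define q where "q i = snd (pq i)" for i
  have pq: "p i \<in> polys_over k \<and> q i \<in> polys_over k \<and> q i \<noteq> 0 \<and> c i = poly (p i) f / poly (q i) f"
    if "i \<le> n" for i
    using pq'[OF that] by (simp add: p_def q_def)
  have qf: "poly (q i) f \<noteq> 0" if "i \<le> n" for i using poly_at_f_nonzero pq[OF that] by blast
  define b where "b i = p i * (\<Prod>l\<in>{..n}-{i}. q l)" for i
  define P where "P = (\<Sum>i\<le>n. monom (b i) i)"
  have coeff_P: "coeff P i = (if i \<le> n then b i else 0)" for i unfolding P_def
    by (rule coeff_sum_monom)
  have "b i \<in> polys_over k" if "i \<le> n" for i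
    unfolding b_def using pq that
    by (intro subringD(4)[OF subring_kX] subring_prod[OF subring_kX]) auto
  then have "P \<in> kXY" using subringD(1)[OF subring_kX]
    by (intro polys_overI[of P]) (simp add: coeff_P)
  moreover have "P \<noteq> 0"
  proof -
    obtain i where i: "i \<le> n" "c i \<noteq> 0" using c(2) by blast
    then have "p i \<noteq> 0" "(\<Prod>l\<in>{..n}-{i}. q l) \<noteq> 0" using pq by auto
    then have "coeff P i \<noteq> 0" using i by (simp add: coeff_P b_def)
    then show ?thesis by auto
  qed
  moreover have "poly (b i) f = (\<Prod>l\<le>n. poly (q l) f) * c i" if i: "i \<le> n" for i
  proof -
    have "(\<Prod>l\<le>n. poly (q l) f) = poly (q i) f * (\<Prod>l\<in>{..n}-{i}. poly (q l) f)"
      using i by (simp add: prod.remove)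
    then show ?thesis using pq[OF i] qf[OF i] by (simp add: b_def poly_prod field_simps)
  qed
  then have "poly2 P f z = (\<Prod>l\<le>n. poly (q l) f) * (\<Sum>i\<le>n. c i * z ^ i)"
    by (simp add: P_def poly2_sum sum_distrib_left mult.assoc)
  then have "poly2 P f z = 0" using rel by simp
  ultimately have "annihilates P z" unfolding annihilates_def by blast
  then show ?thesis by (rule that)
qed

lemma E_algebraic:
  assumes "z \<in> E"
  obtains P where "annihilates P z"
proof -
  obtain c where "\<forall>i\<le>degree Q. c i \<in> kf" "\<exists>i\<le>degree Q. c i \<noteq> 0" "(\<Sum>i\<le>degree Q. c i * z ^ i) = 0"
    using V_powers_dependent E_subset_V assms by blast
  then show ?thesis using that by (rule annihilates_if_kf_relation)
qed

section \<open>Eigenvalues of \<open>\<delta>\<close>\<close>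

lemma delta_poly2_at:
  assumes z: "z \<in> E" and P: "P \<in> kXY"
  shows "delta (poly2 P f z) = f * poly2 (map_poly pderiv P) f z + poly2 (pderiv P) f z * delta z"
proof -
  have "delta (poly2 P f z) = poly2 (map_poly (map_poly delta) P) f z
      + poly2 (map_poly pderiv P) f z * delta f + poly2 (pderiv P) f z * delta z"
    by (rule derivation_poly2[OF E_subring delta_derivation_on _ P f_in_E z]) (use k_in_E in blast)
  moreover have "map_poly (map_poly delta) P = 0"
    by (rule map_poly2_eq_0[where T=k and d=delta, OF delta_k delta_zero P])
  ultimately show ?thesis using delta_f by (simp add: mult.commute)
qed

lemma E_minimal_annihilator:
  assumes z: "z \<in> E"
  obtains P where "annihilates P z" "\<And>R. annihilates R z \<Longrightarrow> degree P \<le> degree R"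
  using E_algebraic[OF z] ex_minimal_annihilator by metis

lemma minimal_annihilator_multiple:
  assumes P: "annihilates P z" and P_min: "\<And>R. annihilates R z \<Longrightarrow> degree P \<le> degree R"
    and P': "P' \<in> kXY" "degree P' \<le> degree P" "poly2 P' f z = 0"
  shows "smult (lead_coeff P) P' = smult (coeff P' (degree P)) P"
proof (rule ccontr)
  define R where "R = smult (lead_coeff P) P' - smult (coeff P' (degree P)) P"
  assume "smult (lead_coeff P) P' \<noteq> smult (coeff P' (degree P)) P"
  then have "R \<noteq> 0" by (simp add: R_def)
  moreover have "R \<in> kXY" unfolding R_def using annihilatesD(1)[OF P] P'
    by (intro subringD(6)[OF subring_kXY] polys_over_smult[OF subring_kX] polys_overD) auto
  moreover have "poly2 R f z = 0" using annihilatesD(3)[OF P] P' by (simp add: R_def)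
  ultimately have "annihilates R z" unfolding annihilates_def by blast
  moreover have "degree R < degree P"
  proof (rule degree_less_if_less_eqI)
    show "degree R \<le> degree P" unfolding R_def using P'
      by (intro degree_diff_le) (auto intro: order_trans[OF degree_smult_le])
    show "coeff R (degree P) = 0" by (simp add: R_def mult.commute)
  qed (fact \<open>R \<noteq> 0\<close>)
  ultimately show False using P_min by fastforce
qed

lemma minimal_annihilator_coeff_0:
  assumes "z \<noteq> 0" and P: "annihilates P z" and P_min: "\<And>R. annihilates R z \<Longrightarrow> degree P \<le> degree R"
  shows "coeff P 0 \<noteq> 0"
proof
  assume "coeff P 0 = 0"
  then obtain P1 where P1: "P = pCons 0 P1" by (cases P) auto
  then have "P1 \<noteq> 0" "P1 \<in> kXY" "poly2 P1 f z = 0"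
    using annihilatesD[OF P] \<open>z \<noteq> 0\<close> subringD(1)[OF subring_kX] polys_over_pCons by auto
  then have "annihilates P1 z" unfolding annihilates_def by blast
  moreover have "degree P1 < degree P" using P1 \<open>P1 \<noteq> 0\<close> by simp
  ultimately show False using P_min by fastforce
qed

text \<open>If \<open>\<delta> z = l z + m\<close>, applying \<open>\<delta>\<close> to the minimal relation \<open>P(f, z) = 0\<close> gives a relation of
  no larger degree, hence a multiple of \<open>P\<close>; comparing coefficients yields Euler-Wronskian identities
  between the coefficients of \<open>P\<close>.\<close>

lemma minimal_annihilator_euler_wronskian:
  assumes z: "z \<in> E" and l: "l \<in> k" and m: "m \<in> k" and delta_z: "delta z = l * z + m"
    and P: "annihilates P z" and P_min: "\<And>R. annihilates R z \<Longrightarrow> degree P \<le> degree R"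
  shows "euler_wronskian (coeff P j) (lead_coeff P) + smult (l * of_nat j) (coeff P j * lead_coeff P)
      + smult (m * of_nat (Suc j)) (coeff P (Suc j) * lead_coeff P)
    = smult (l * of_nat (degree P)) (coeff P j * lead_coeff P)"
proof (rule euler_wronskian_if_delta_lift)
  note kX = subringD[OF subring_kX] and kXY = subringD[OF subring_kXY]
  have P': "delta_lift l m P \<in> kXY"
    unfolding delta_lift_def using annihilatesD(1)[OF P] l m
    by (intro kXY polys_over_smult[OF subring_kX] X_in_kX map_pderiv_in_kXY polys_over_const
        iffD2[OF polys_over_pCons])
      (auto simp: kX subringD(1)[OF k_subring] intro: polys_over_pderiv[OF subring_kX])
  have "poly2 (delta_lift l m P) f z = 0"
    using delta_poly2_at[OF z annihilatesD(1)[OF P]] annihilatesD(3)[OF P] delta_z delta_zero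
    by (simp add: poly2_delta_lift)
  then have "smult (lead_coeff P) (delta_lift l m P) = smult (coeff (delta_lift l m P) (degree P)) P"
    using minimal_annihilator_multiple[OF P P_min P' degree_delta_lift] by blast
  from arg_cong[OF this, of "\<lambda>R. coeff R j"]
  show "lead_coeff P * coeff (delta_lift l m P) j = coeff (delta_lift l m P) (degree P) * coeff P j"
    by simp
qed

lemma delta_ne_1:
  assumes z: "z \<in> E"
  shows "delta z \<noteq> 1"
proof
  assume "delta z = 1"
  obtain P where P: "annihilates P z" "\<And>R. annihilates R z \<Longrightarrow> degree P \<le> degree R"
    using E_minimal_annihilator[OF z] by blast
  obtain j where j: "degree P = Suc j" using annihilates_degree_pos[OF P(1)] not0_implies_Suc
    by blast
  have "euler_wronskian (coeff P j) (lead_coeff P) + smult (of_nat (degree P)) (lead_coeff P * lead_coeff P) = 0"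
    using minimal_annihilator_euler_wronskian[OF z subringD(1,2)[OF k_subring] _ P, of j] \<open>delta z = 1\<close> j
    by simp
  then have "euler_wronskian (coeff P j) (lead_coeff P) = smult (- of_nat (degree P)) (lead_coeff P * lead_coeff P)"
    by (simp add: eq_neg_iff_add_eq_0)
  moreover have "lead_coeff P \<noteq> 0" using annihilatesD(2)[OF P(1)] by simp
  moreover have "- of_nat (degree P) \<noteq> (0::'a)" using j
    by (simp only: neg_equal_0_iff_equal of_nat_eq_0_iff)
  ultimately show False using euler_wronskian_ne_smult_square by blast
qed

lemma delta_eq_0_imp_in_k:
  assumes z: "z \<in> E" and delta_z: "delta z = 0"
  shows "z \<in> k"
proof -
  obtain P where P: "annihilates P z" "\<And>R. annihilates R z \<Longrightarrow> degree P \<le> degree R"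
    using E_minimal_annihilator[OF z] by blast
  define n where "n = degree P"
  define q where "q = lead_coeff P"
  have q: "q \<in> polys_over k" "q \<noteq> 0" using annihilatesD[OF P(1)] polys_overD by (auto simp: q_def)
  define c where "c j = lead_coeff (coeff P j) / lead_coeff q" for j
  have coeff_P: "coeff P j = smult (c j) q" for j
    using minimal_annihilator_euler_wronskian[OF z subringD(1,1)[OF k_subring] _ P, of j] delta_z
      euler_wronskian_eq_0_proportional[OF q(2)] by (simp add: c_def q_def)
  have c: "c j \<in> k" for j unfolding c_def
    using annihilatesD(1)[OF P(1)] q by (intro subfield_divide[OF k_subfield] polys_overD) auto
  define p where "p = (\<Sum>j\<le>n. monom (c j) j)"
  have coeff_p: "coeff p j = (if j \<le> n then c j else 0)" for j unfolding p_def
    by (rule coeff_sum_monom)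
  have "p \<in> polys_over k" using c subringD(1)[OF k_subring]
    by (intro polys_overI) (simp add: coeff_p)
  moreover have "c n = 1" using q by (simp add: c_def q_def n_def)
  then have "p \<noteq> 0" using coeff_p[of n] by auto
  moreover have "poly q f * poly p z = poly2 P f z"
    by (simp add: poly2_altdef coeff_P p_def n_def poly_sum poly_monom sum_distrib_left algebra_simps)
  then have "poly p z = 0" using annihilatesD(3)[OF P(1)] poly_at_f_nonzero[OF q] by simp
  ultimately show ?thesis using root_in_k by blast
qed

lemma eigenvalue_rational:
  assumes z: "z \<in> E" "z \<noteq> 0" and l: "l \<in> k" and delta_z: "delta z = l * z"
  obtains n :: nat and r :: int where "n > 0" "of_nat n * l = of_int r"
proof -
  obtain P where P: "annihilates P z" "\<And>R. annihilates R z \<Longrightarrow> degree P \<le> degree R"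
    using E_minimal_annihilator[OF z(1)] by blast
  have "euler_wronskian (coeff P 0) (lead_coeff P) = smult (l * of_nat (degree P)) (coeff P 0 * lead_coeff P)"
    using minimal_annihilator_euler_wronskian[OF z(1) l subringD(1)[OF k_subring] _ P, of 0] delta_z
    by simp
  moreover have "lead_coeff P \<noteq> 0" using annihilatesD(2)[OF P(1)] by simp
  ultimately have "l * of_nat (degree P) = of_nat (degree (coeff P 0)) - of_nat (degree (lead_coeff P))"
    using euler_wronskian_eq_smult_mult minimal_annihilator_coeff_0[OF z(2) P] by blast
  then have "of_nat (degree P) * l = of_int (int (degree (coeff P 0)) - int (degree (lead_coeff P)))"
    by (simp add: mult.commute)
  then show ?thesis using that annihilates_degree_pos[OF P(1)] by blast
qed

lemma delta_add: "x \<in> E \<Longrightarrow> y \<in> E \<Longrightarrow> delta (x + y) = delta x + delta y"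
  using derivation_onD(1)[OF delta_derivation_on] .

lemma delta_mult: "x \<in> E \<Longrightarrow> y \<in> E \<Longrightarrow> delta (x * y) = x * delta y + delta x * y"
  using derivation_onD(2)[OF delta_derivation_on] .

lemma delta_kmult: "c \<in> k \<Longrightarrow> x \<in> E \<Longrightarrow> delta (c * x) = c * delta x"
  using delta_mult[OF k_in_E] delta_k by simp

lemma delta_diff: "x \<in> E \<Longrightarrow> y \<in> E \<Longrightarrow> delta (x - y) = delta x - delta y"
  using derivation_diff[OF E_subring delta_derivation_on] .

lemma delta_power_eigen:
  assumes x: "x \<in> E" and Ex: "delta x = c * x"
  shows "delta (x ^ m) = of_nat m * c * x ^ m"
  using derivation_power[OF E_subring delta_derivation_on x, of m] Ex
  by (cases m) (simp_all add: algebra_simps)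

lemma delta_f_powi: "f powi r \<in> E \<and> delta (f powi r) = of_int r * f powi r"
proof (cases "r \<ge> 0")
  case True
  then show ?thesis
    using delta_power_eigen[OF f_in_E, of 1 "nat r"] delta_f subring_power[OF E_subring f_in_E]
    by (simp add: power_int_def)
next
  case False
  define m where "m = nat (- r)"
  have fm: "f ^ m \<in> E" "f ^ m \<noteq> 0" using subring_power[OF E_subring f_in_E] f0 by auto
  have "f powi r = 1 / f ^ m" using False
    by (simp add: m_def power_int_def divide_inverse power_inverse)
  moreover have "delta (1 / f ^ m) = (0 * f ^ m - 1 * delta (f ^ m)) / (f ^ m)\<^sup>2"
    using derivation_divide[OF E_subfield delta_derivation_on k_in_E fm] subringD(2)[OF k_subring]
      derivation_one[OF E_subring delta_derivation_on] by simp
  ultimately show ?thesis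
    using delta_power_eigen[OF f_in_E, of 1 m] delta_f False E_divide[OF k_in_E fm(1)] subringD(2)[OF k_subring]
    by (simp add: m_def power2_eq_square field_simps)
qed

lemma eigenvector_power_monomial:
  assumes h: "h \<in> E" "h \<noteq> 0" and l: "l \<in> k" and delta_h: "delta h = l * h"
  obtains n r b where "n > 0" "b \<in> k" "h ^ n = b * f powi r"
proof -
  obtain n r where n: "n > 0" and nr: "of_nat n * l = of_int r"
    using eigenvalue_rational[OF h l delta_h] .
  have hn: "h ^ n \<in> E" "delta (h ^ n) = of_int r * h ^ n"
    using subring_power[OF E_subring h(1)] delta_power_eigen[OF h(1) delta_h, of n] nr
    by (auto simp: mult.assoc)
  have fr: "f powi r \<in> E" "delta (f powi r) = of_int r * f powi r" "f powi r \<noteq> 0"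
    using delta_f_powi f0 by auto
  define b where "b = h ^ n / f powi r"
  have "delta b = 0"
    unfolding b_def derivation_divide[OF E_subfield delta_derivation_on hn(1) fr(1,3)] hn(2) fr(2)
    by simp
  then have "b \<in> k" using delta_eq_0_imp_in_k E_divide[OF hn(1) fr(1)] by (simp add: b_def)
  moreover have "h ^ n = b * f powi r" using fr(3) by (simp add: b_def)
  ultimately show ?thesis using that n by blast
qed

lemma no_generalized_eigenvector:
  assumes u: "u \<in> E" and l: "l \<in> k" and Ev: "delta (delta u - l * u) = l * (delta u - l * u)"
  shows "delta u - l * u = 0"
proof (rule ccontr)
  define v where "v = delta u - l * u"
  assume "delta u - l * u \<noteq> 0"
  then have v0: "v \<noteq> 0" by (simp add: v_def)
  have vE: "v \<in> E" unfolding v_def by (intro E_diff delta_in_E u E_mult k_in_E l)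
  have Ev': "delta v = l * v" using Ev by (simp add: v_def)
  have Eu: "delta u = v + l * u" by (simp add: v_def)
  have "delta (u / v) = (delta u * v - u * delta v) / v^2"
    by (rule derivation_divide[OF E_subfield delta_derivation_on u vE v0])
  also have "\<dots> = 1" unfolding Eu Ev' using v0 by (simp add: field_simps power2_eq_square)
  finally show False using delta_ne_1[OF E_divide[OF u vE]] by simp
qed

section \<open>Decomposition into eigenvectors of \<open>\<delta>\<close>\<close>

lemma delta_pow_in_E: "z \<in> E \<Longrightarrow> (delta ^^ i) z \<in> E"
  by (induction i) (auto intro: delta_in_E)

definition delta_op :: "'a poly \<Rightarrow> 'a \<Rightarrow> 'a" where
  "delta_op p z = (\<Sum>i\<le>degree p. coeff p i * (delta ^^ i) z)"

lemma delta_op_upto: "degree p \<le> N \<Longrightarrow> delta_op p z = (\<Sum>i\<le>N. coeff p i * (delta ^^ i) z)"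
  using sum_coeff_upto[of p N "\<lambda>i. (delta ^^ i) z"] by (simp add: delta_op_def)

lemma delta_op_in_E: "p \<in> polys_over k \<Longrightarrow> z \<in> E \<Longrightarrow> delta_op p z \<in> E"
  unfolding delta_op_def
  by (intro subring_sum[OF E_subring] E_mult k_in_E[OF polys_overD] delta_pow_in_E) auto

lemma delta_op_pCons: "delta_op (pCons c p) z = c * z + delta_op p (delta z)"
proof -
  have "delta_op (pCons c p) z = (\<Sum>i\<le>Suc (degree p). coeff (pCons c p) i * (delta ^^ i) z)"
    by (rule delta_op_upto) (simp add: degree_pCons_le)
  also have "\<dots> = c * z + (\<Sum>i\<le>degree p. coeff p i * delta ((delta ^^ i) z))"
    by (subst sum.atMost_Suc_shift) simp
  also have "(\<Sum>i\<le>degree p. coeff p i * delta ((delta ^^ i) z)) = delta_op p (delta z)"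
    by (simp add: delta_op_def funpow_swap1)
  finally show ?thesis .
qed

lemma delta_op_0: "delta_op 0 z = 0" by (simp add: delta_op_def)

lemma delta_op_const: "delta_op [:c:] z = c * z" by (simp add: delta_op_def)

lemma delta_pow_add: "x \<in> E \<Longrightarrow> y \<in> E \<Longrightarrow> (delta ^^ i) (x + y) = (delta ^^ i) x + (delta ^^ i) y"
  by (induction i) (auto simp: delta_add delta_pow_in_E)

lemma delta_pow_kmult: "c \<in> k \<Longrightarrow> x \<in> E \<Longrightarrow> (delta ^^ i) (c * x) = c * (delta ^^ i) x"
  by (induction i) (auto simp: delta_kmult delta_pow_in_E)

lemma delta_pow_diff: "x \<in> E \<Longrightarrow> y \<in> E \<Longrightarrow> (delta ^^ i) (x - y) = (delta ^^ i) x - (delta ^^ i) y"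
  by (induction i) (auto simp: delta_diff delta_pow_in_E)

lemma delta_op_diff_right: "x \<in> E \<Longrightarrow> y \<in> E \<Longrightarrow> delta_op p (x - y) = delta_op p x - delta_op p y"
  by (simp add: delta_op_def delta_pow_diff sum_subtractf algebra_simps)

lemma delta_op_add: "delta_op (p + q) z = delta_op p z + delta_op q z"
proof -
  define N where "N = max (degree p) (degree q)"
  have "delta_op (p + q) z = (\<Sum>i\<le>N. coeff (p + q) i * (delta ^^ i) z)"
    by (rule delta_op_upto) (simp add: N_def degree_add_le)
  also have "\<dots> = (\<Sum>i\<le>N. coeff p i * (delta ^^ i) z) + (\<Sum>i\<le>N. coeff q i * (delta ^^ i) z)"
    by (simp add: sum.distrib algebra_simps)
  also have "\<dots> = delta_op p z + delta_op q z" using delta_op_upto[of p N z] delta_op_upto[of q N z]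
    by (simp add: N_def)
  finally show ?thesis .
qed

lemma delta_op_smult: "delta_op (smult c p) z = c * delta_op p z"
proof -
  have "delta_op (smult c p) z = (\<Sum>i\<le>degree p. coeff (smult c p) i * (delta ^^ i) z)"
    by (rule delta_op_upto) (simp add: degree_smult_le)
  then show ?thesis by (simp add: delta_op_def sum_distrib_left mult.assoc)
qed

lemma delta_delta_op: "p \<in> polys_over k \<Longrightarrow> z \<in> E \<Longrightarrow> delta (delta_op p z) = delta_op p (delta z)"
proof -
  assume p: "p \<in> polys_over k" and z: "z \<in> E"
  have "delta (delta_op p z) = (\<Sum>i\<le>degree p. delta (coeff p i * (delta ^^ i) z))"
    unfolding delta_op_def
    by (rule derivation_sum[OF E_subring delta_derivation_on])
      (intro E_mult k_in_E polys_overD[OF p] delta_pow_in_E z)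
  also have "\<dots> = (\<Sum>i\<le>degree p. coeff p i * (delta ^^ i) (delta z))"
    using p z by (simp add: delta_kmult polys_overD delta_pow_in_E funpow_swap1)
  finally show ?thesis by (simp add: delta_op_def)
qed

lemma delta_op_mult:
  "p \<in> polys_over k \<Longrightarrow> q \<in> polys_over k \<Longrightarrow> z \<in> E \<Longrightarrow> delta_op (p * q) z = delta_op p (delta_op q z)"
proof (induction p arbitrary: z)
  case 0 then show ?case by (simp add: delta_op_def)
next
  case (pCons c p)
  have c: "c \<in> k" and p: "p \<in> polys_over k"
    using pCons.prems(1) polys_over_pCons subringD(1)[OF k_subring] by blast+
  have "delta_op (pCons c p * q) z = delta_op (smult c q + pCons 0 (p * q)) z" by simp
  also have "\<dots> = c * delta_op q z + delta_op (p * q) (delta z)"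
    by (simp add: delta_op_add delta_op_smult delta_op_pCons)
  also have "delta_op (p * q) (delta z) = delta_op p (delta_op q (delta z))"
    by (rule pCons.IH[OF p pCons.prems(2) delta_in_E[OF pCons.prems(3)]])
  also have "delta_op q (delta z) = delta (delta_op q z)" using delta_delta_op[OF pCons.prems(2,3)]
    by simp
  finally show ?case by (simp add: delta_op_pCons)
qed

lemma delta_op_eigen:
  assumes h: "h \<in> E" and l: "l \<in> k" and Eh: "delta h = l * h"
  shows "delta_op p h = poly p l * h"
proof -
  have "(delta ^^ i) h = l ^ i * h" for i
  proof (induction i)
    case (Suc i)
    have "(delta ^^ Suc i) h = delta (l ^ i * h)" using Suc by simp
    also have "\<dots> = l ^ i * delta h" by (rule delta_kmult[OF subring_power[OF k_subring l] h])
    finally show ?case using Eh by (simp add: mult_ac)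
  qed simp
  then show ?thesis
    by (simp add: delta_op_def poly_altdef sum_distrib_right sum_distrib_left algebra_simps)
qed

lemma delta_op_linear: "delta_op [:-l, 1:] z = delta z - l * z"
  by (simp add: delta_op_pCons delta_op_const delta_op_0)


lemma linear_in_kX: "l \<in> k \<Longrightarrow> [:-l, 1:] \<in> polys_over k"
  using subringD(1,2,5)[OF k_subring] subringD(1)[OF subring_kX] by (simp add: polys_over_pCons)

lemma split_off_eigenvector:
  assumes \<nu>: "\<nu> \<in> polys_over k" and l: "l \<in> k" and z: "z \<in> E" and \<mu>z: "delta_op ([:-l, 1:] * \<nu>) z = 0"
  obtains h where "h \<in> E" "delta h = l * h" "delta_op \<nu> (z - h) = 0"
proof -
  define y where "y = delta_op \<nu> z"
  have y: "y \<in> E" unfolding y_def by (rule delta_op_in_E[OF \<nu> z])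
  have "delta_op [:-l, 1:] y = 0" using \<mu>z delta_op_mult[OF linear_in_kX[OF l] \<nu> z]
    by (simp add: y_def)
  then have delta_y: "delta y = l * y" by (simp add: delta_op_linear)
  show ?thesis
  proof (cases "poly \<nu> l = 0")
    case False
    have c: "inverse (poly \<nu> l) \<in> k"
      by (rule subfield_inverse[OF k_subfield poly_in_subring[OF k_subring order_refl \<nu> l]])
    define h where "h = inverse (poly \<nu> l) * y"
    have h: "h \<in> E" unfolding h_def by (intro E_mult k_in_E c y)
    have delta_h: "delta h = l * h" unfolding h_def using delta_kmult[OF c y] delta_y
      by (simp add: mult_ac)
    have "delta_op \<nu> h = y" using delta_op_eigen[OF h l delta_h] False by (simp add: h_def)
    then have "delta_op \<nu> (z - h) = 0" using delta_op_diff_right[OF z h] by (simp add: y_def)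
    then show ?thesis using that h delta_h by blast
  next
    case True
    \<comment> \<open>A double root \<open>l\<close> would make \<open>y\<close> the image of a generalised eigenvector, so \<open>y = 0\<close>.\<close>
    define \<rho> where "\<rho> = synthetic_div \<nu> l"
    have \<nu>_eq: "\<nu> = [:-l, 1:] * \<rho>" using synthetic_div_correct'[of l \<nu>] True by (simp add: \<rho>_def)
    have \<rho>: "\<rho> \<in> polys_over k" unfolding \<rho>_def by (rule polys_over_synthetic_div[OF k_subring l \<nu>])
    define u where "u = delta_op \<rho> z"
    have u: "u \<in> E" unfolding u_def by (rule delta_op_in_E[OF \<rho> z])
    have "y = delta u - l * u" unfolding y_def u_def \<nu>_eq
      using delta_op_mult[OF linear_in_kX[OF l] \<rho> z] by (simp add: delta_op_linear)
    then have "y = 0" using no_generalized_eigenvector[OF u l] delta_y by simp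
    then show ?thesis using that[of 0] E_subring delta_zero by (simp add: y_def subringD)
  qed
qed

definition eigen_sum :: "'a \<Rightarrow> bool" where
  "eigen_sum z \<longleftrightarrow> (\<exists>hs. z = sum_list (map fst hs) \<and> (\<forall>(h, l)\<in>set hs. h \<in> E \<and> l \<in> k \<and> delta h = l * h))"

lemma eigen_sum_0: "eigen_sum 0"
  unfolding eigen_sum_def by (intro exI[of _ "[]"]) simp

lemma eigen_sum_add_eigenvector:
  assumes "eigen_sum x" "h \<in> E" "l \<in> k" "delta h = l * h"
  shows "eigen_sum (x + h)"
proof -
  obtain hs where "x = sum_list (map fst hs)" "\<forall>(h, l)\<in>set hs. h \<in> E \<and> l \<in> k \<and> delta h = l * h"
    using assms(1) unfolding eigen_sum_def by blast
  then show ?thesis using assms(2-4) unfolding eigen_sum_def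
    by (intro exI[of _ "(h, l) # hs"]) (auto simp: add.commute)
qed

lemma eigen_decomposition:
  "\<mu> \<in> polys_over k \<Longrightarrow> \<mu> \<noteq> 0 \<Longrightarrow> z \<in> E \<Longrightarrow> delta_op \<mu> z = 0 \<Longrightarrow> eigen_sum z"
proof (induction "degree \<mu>" arbitrary: \<mu> z rule: less_induct)
  case less
  show ?case
  proof (cases "degree \<mu> = 0")
    case True
    then obtain c where "\<mu> = [:c:]" "c \<noteq> 0" using less.prems(2) by (metis degree_eq_zeroE pCons_0_0)
    then have "z = 0" using less.prems(4) by (simp add: delta_op_const)
    then show ?thesis by (simp add: eigen_sum_0)
  next
    case False
    then obtain l where l: "l \<in> k" "poly \<mu> l = 0"
      using k_closed less.prems(1) unfolding alg_closed_subfield_def polys_over_def by auto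
    define \<nu> where "\<nu> = synthetic_div \<mu> l"
    have \<mu>_eq: "\<mu> = [:-l, 1:] * \<nu>" using synthetic_div_correct'[of l \<mu>] l(2) by (simp add: \<nu>_def)
    have \<nu>: "\<nu> \<in> polys_over k" unfolding \<nu>_def
      by (rule polys_over_synthetic_div[OF k_subring l(1) less.prems(1)])
    obtain h where h: "h \<in> E" "delta h = l * h" "delta_op \<nu> (z - h) = 0"
      using split_off_eigenvector[OF \<nu> l(1) less.prems(3)] less.prems(4) \<mu>_eq by metis
    have "eigen_sum (z - h)"
    proof (rule less.hyps[OF _ \<nu> _ E_diff[OF less.prems(3) h(1)] h(3)])
      show "degree \<nu> < degree \<mu>" using False by (simp add: \<nu>_def degree_synthetic_div)
      show "\<nu> \<noteq> 0" using \<mu>_eq less.prems(2) by auto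
    qed
    then show ?thesis using eigen_sum_add_eigenvector[OF _ h(1) l(1) h(2)] by fastforce
  qed
qed

section \<open>Solutions of linear differential equations are Laurent polynomials\<close>

lemma delta_pow_zero: "(delta ^^ j) 0 = 0" by (induction j) (simp_all add: delta_zero)

lemma delta_pow_sum: "(\<And>i. i \<in> A \<Longrightarrow> c i \<in> k \<and> x i \<in> E) \<Longrightarrow>
    (delta ^^ j) (\<Sum>i\<in>A. c i * x i) = (\<Sum>i\<in>A. c i * (delta ^^ j) (x i))"
proof (induction A rule: infinite_finite_induct)
  case (insert a F)
  have ce: "c i \<in> E" "x i \<in> E" if "i \<in> insert a F" for i using insert.prems that k_in_E by blast+
  have s: "(\<Sum>i\<in>F. c i * x i) \<in> E" using ce by (intro subring_sum[OF E_subring] E_mult) auto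
  have a: "c a * x a \<in> E" using ce by (intro E_mult) auto
  show ?case using insert delta_pow_add[OF a s] delta_pow_kmult by simp
qed (simp_all add: delta_pow_zero)

lemma D_delta_pow: "z \<in> E \<Longrightarrow> D ((delta ^^ j) z) = (delta ^^ j) (D z)"
proof (induction j arbitrary: z)
  case (Suc j)
  have "D ((delta ^^ Suc j) z) = D (delta ((delta ^^ j) z))" by simp
  also have "\<dots> = delta (D ((delta ^^ j) z))"
    by (rule D_delta_commute[OF delta_pow_in_E[OF Suc.prems]])
  also have "\<dots> = (delta ^^ Suc j) (D z)" using Suc by simp
  finally show ?case .
qed simp

lemma D_pow_in_E: "z \<in> E \<Longrightarrow> (D ^^ i) z \<in> E"
  by (induction i) (auto intro: D_in_E)

lemma D_pow_delta_pow: "z \<in> E \<Longrightarrow> (D ^^ i) ((delta ^^ j) z) = (delta ^^ j) ((D ^^ i) z)"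
proof (induction i)
  case (Suc i)
  then show ?case using D_delta_pow[OF D_pow_in_E[OF Suc.prems]] by simp
qed simp

lemma delta_op_annihilates_g:
  fixes c :: "nat \<Rightarrow> 'a"
  assumes ck: "\<forall>i\<le>m. c i \<in> k" and cm: "c m \<noteq> 0" and gsol: "(\<Sum>i\<le>m. c i * (D ^^ i) g) = 0"
  obtains \<mu> where "\<mu> \<in> polys_over k" "\<mu> \<noteq> 0" "delta_op \<mu> g = 0"
proof -
  define y where "y j = (delta ^^ j) g" for j
  have yE: "y j \<in> E" for j unfolding y_def by (rule delta_pow_in_E[OF g_in_E])
  \<comment> \<open>Since \<open>\<delta>\<close> commutes with \<open>D\<close>, every \<open>\<delta>\<^sup>j g\<close> solves the same equation as \<open>g\<close>.\<close>
  have ysol: "(\<Sum>i\<le>m. c i * (D ^^ i) (y j)) = 0" for j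
  proof -
    have "(\<Sum>i\<le>m. c i * (D ^^ i) (y j)) = (\<Sum>i\<le>m. c i * (delta ^^ j) ((D ^^ i) g))"
      by (simp add: y_def D_pow_delta_pow[OF g_in_E])
    also have "\<dots> = (delta ^^ j) (\<Sum>i\<le>m. c i * (D ^^ i) g)"
      by (rule delta_pow_sum[symmetric]) (use ck D_pow_in_E[OF g_in_E] in auto)
    finally show ?thesis using gsol delta_pow_zero by simp
  qed
  obtain \<gamma> where \<gamma>: "\<forall>j\<le>m. \<gamma> j \<in> k" "\<exists>j\<le>m. \<gamma> j \<noteq> 0" "(\<Sum>j\<le>m. \<gamma> j * y j) = 0"
    using ode_solutions_dependent_over_k[of c m y, OF cm] yE E_subset_K ysol by blast
  define \<mu> where "\<mu> = (\<Sum>j\<le>m. monom (\<gamma> j) j)"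
  have coeff_\<mu>: "coeff \<mu> j = (if j \<le> m then \<gamma> j else 0)" for j unfolding \<mu>_def
    by (rule coeff_sum_monom)
  have "\<mu> \<in> polys_over k" using \<gamma>(1) subringD(1)[OF k_subring]
    by (intro polys_overI) (simp add: coeff_\<mu>)
  moreover have "\<mu> \<noteq> 0" using \<gamma>(2) coeff_\<mu> by (metis coeff_0)
  moreover have "delta_op \<mu> g = (\<Sum>j\<le>m. coeff \<mu> j * (delta ^^ j) g)"
    by (rule delta_op_upto) (simp add: degree_le coeff_\<mu>)
  then have "delta_op \<mu> g = 0" using \<gamma>(3) by (simp add: coeff_\<mu> y_def)
  ultimately show ?thesis using that by blast
qed

lemma hlde_imp_laurent:
  fixes c :: "nat \<Rightarrow> 'a"
  assumes ck: "\<forall>i\<le>m. c i \<in> k" and cm: "c m \<noteq> 0" and gsol: "(\<Sum>i\<le>m. c i * (D ^^ i) g) = 0"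
  shows "\<exists>\<theta> (n::int). algebraic_over K \<theta> \<and> \<theta> \<noteq> 0 \<and> f = \<theta> powi n \<and> in_laurent k \<theta> g"
proof -
  obtain \<mu> where \<mu>: "\<mu> \<in> polys_over k" "\<mu> \<noteq> 0" "delta_op \<mu> g = 0"
    using delta_op_annihilates_g[OF ck cm gsol] .
  obtain hs where hs: "g = sum_list (map fst hs)" "\<forall>(h, l)\<in>set hs. h \<in> E \<and> l \<in> k \<and> delta h = l * h"
    using eigen_decomposition[OF \<mu>(1,2) g_in_E \<mu>(3)] unfolding eigen_sum_def by blast
  have "\<exists>n>0. \<exists>r b. b \<in> k \<and> fst p ^ n = b * f powi r" if p: "p \<in> set hs" for p
  proof -
    obtain h l where hl: "p = (h, l)" "h \<in> E" "l \<in> k" "delta h = l * h" using hs(2) p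
      by (cases p) auto
    show ?thesis
    proof (cases "h = 0")
      case True
      then show ?thesis using hl(1) subringD(1)[OF k_subring] by (intro exI[of _ 1]) auto
    next
      case False
      then obtain n r b where "n > 0" "b \<in> k" "h ^ n = b * f powi r"
        using eigenvector_power_monomial[OF hl(2) _ hl(3,4)] by blast
      then show ?thesis using hl(1) by auto
    qed
  qed
  then obtain n r b where nrb: "\<And>p. p \<in> set hs \<Longrightarrow> n p > 0 \<and> b p \<in> k \<and> fst p ^ n p = b p * f powi r p"
    by metis
  define M where "M = prod_list (map n hs)"
  have "0 \<notin> set (map n hs)" using nrb by force
  then have "M > 0" using prod_list_zero_iff[of "map n hs"] by (simp add: M_def)
  then obtain \<theta> where \<theta>: "\<theta> ^ M = f" "algebraic_over K \<theta>" by (rule ex_algebraic_nth_root_f)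
  have "in_laurent k \<theta> (fst p)" if "p \<in> set hs" for p
    using monomial_root_in_laurent[of "n p" M \<theta> "b p" "fst p" "r p"] nrb[OF that] \<theta>(1) that
    by (simp add: M_def prod_list_dvd)
  then have "in_laurent k \<theta> g" unfolding hs(1) by (auto intro!: in_laurent_sum_list[OF k_subring])
  moreover have "\<theta> \<noteq> 0" "f = \<theta> powi int M" using \<theta>(1) f0 \<open>M > 0\<close> by auto
  ultimately show ?thesis using \<theta>(2) by blast
qed

end

theorem theorem12:
  fixes K k :: "'a :: {alg_closed_field, field_char_0} set"
    and D :: "'a \<Rightarrow> 'a"
    and f g a :: 'a
  assumes K: "differential_field K D"
    and k: "differential_subfield k K D"
    and k_closed: "alg_closed_subfield k"
    and same_consts: "constants K D = constants k D"
    and f: "f \<in> K" "f \<noteq> 0" "f \<notin> k"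
    and a: "a \<in> k" "D f = a * f"
    and g: "g \<in> K" "satisfies_nonzero_hlde k D g"
  shows "alg_dependent2 k f g \<longleftrightarrow>
     (\<exists>\<theta> (n::int). algebraic_over K \<theta> \<and> \<theta> \<noteq> 0 \<and>
        f = \<theta> powi n \<and> in_laurent k \<theta> g)"
proof -
  interpret exponential_element K k D f a using assms by unfold_locales auto
  show ?thesis
  proof
    assume "alg_dependent2 k f g"
    then obtain P where "annihilates P g" by (rule alg_dependent2_imp_annihilates)
    then obtain Q where "annihilates Q g" "\<And>P. annihilates P g \<Longrightarrow> degree Q \<le> degree P"
      using ex_minimal_annihilator by metis
    then interpret algebraic_element K k D f a g Q using g(1) by unfold_locales
    obtain m c where "\<forall>i\<le>m. c i \<in> k" "c m \<noteq> 0" "(\<Sum>i\<le>m. c i * (D ^^ i) g) = 0"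
      using g(2) by (rule satisfies_nonzero_hlde_normalized)
    then show "\<exists>\<theta> (n::int). algebraic_over K \<theta> \<and> \<theta> \<noteq> 0 \<and> f = \<theta> powi n \<and> in_laurent k \<theta> g"
      by (rule hlde_imp_laurent)
  next
    assume "\<exists>\<theta> (n::int). algebraic_over K \<theta> \<and> \<theta> \<noteq> 0 \<and> f = \<theta> powi n \<and> in_laurent k \<theta> g"
    then show "alg_dependent2 k f g" using laurent_imp_alg_dependent2[OF k_subfield] f(3) by blast
  qed
qed

end
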